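(* Let $\mathbb{F}$ be a field of characteristic zero, let $d\geq 2$ and $t\geq 1$ be integers, and let $\mathfrak{n}_{d,t}$ be the free $t$-step nilpotent Lie algebra over $\mathbb{F}$ on $d$ generators. Let $\mathfrak{t}$ be an ideal of $\mathfrak{n}_{d,t}$ such that $\mathfrak{t}\subseteq \mathfrak{n}_{d,t}^2$ and $\mathfrak{n}_{d,t}^t\not\subseteq \mathfrak{t}$. Define $$\mathrm{Aut}_{\mathfrak{t}}\,\mathfrak{n}_{d,t}=\{\Phi\in\mathrm{Aut}\,\mathfrak{n}_{d,t}:\ \Phi(\mathfrak{t})\subseteq\mathfrak{t}\},\qquad \mathrm{Aut}^\circ_{\mathfrak{t}}\,\mathfrak{n}_{d,t}=\{\Phi\in\mathrm{Aut}\,\mathfrak{n}_{d,t}:\ \mathrm{Im}(\Phi-\mathrm{Id})\subseteq\mathfrak{t}\}.$$ Then $\mathrm{Aut}^\circ_{\mathfrak{t}}\,\mathfrak{n}_{d,t}$ is a normal subgroup of $\mathrm{Aut}_{\mathfrak{t}}\,\mathfrak{n}_{d,t}$, and the automorphism group $\mathrm{Aut}\,\dfrac{\mathfrak{n}_{d,t}}{\mathfrak{t}}$ of the quotient Lie algebra is isomorphic to the quotient group $\dfrac{\mathrm{Aut}_{\mathfrak{t}}\,\mathfrak{n}_{d,t}}{\mathrm{Aut}^\circ_{\mathfrak{t}}\,\mathfrak{n}_{d,t}}$.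
   Context: All vector spaces are finite-dimensional. For a Lie algebra $\mathfrak{n}$, the lower central series is $\mathfrak{n}^1=\mathfrak{n}$, $\mathfrak{n}^{i+1}=[\mathfrak{n},\mathfrak{n}^i]$. The free $t$-step nilpotent Lie algebra on a set $U=\{x_1,\dots,x_d\}$ is $\mathfrak{n}_{d,t}=\mathfrak{FL}(U)/\mathfrak{FL}(U)^{t+1}$, where $\mathfrak{FL}(U)$ is the free Lie algebra over $\mathbb{F}$ generated by $U$. $\mathrm{Aut}\,\mathfrak{n}$ denotes the group of Lie algebra automorphisms of $\mathfrak{n}$. *)

theory Defs
  imports "HOL-Algebra.Algebra"
begin

record ('k, 'a) alg =
  lcarrier :: "'a set"
  lzero :: 'a
  ladd :: "'a \<Rightarrow> 'a \<Rightarrow> 'a"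
  lsmult :: "'k \<Rightarrow> 'a \<Rightarrow> 'a"
  lbr :: "'a \<Rightarrow> 'a \<Rightarrow> 'a"

definition lsub :: "('k::field, 'a) alg \<Rightarrow> 'a \<Rightarrow> 'a \<Rightarrow> 'a" where
  "lsub L x y = ladd L x (lsmult L (-1) y)"

definition subspace_of :: "('k::field, 'a) alg \<Rightarrow> 'a set \<Rightarrow> bool" where
  "subspace_of L V \<longleftrightarrow> V \<subseteq> lcarrier L \<and> lzero L \<in> V \<and>
     (\<forall>x\<in>V. \<forall>y\<in>V. ladd L x y \<in> V) \<and> (\<forall>c. \<forall>x\<in>V. lsmult L c x \<in> V)"

definition lspan :: "('k::field, 'a) alg \<Rightarrow> 'a set \<Rightarrow> 'a set" where
  "lspan L S = \<Inter>{V. subspace_of L V \<and> S \<subseteq> V}"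

definition lie_ideal :: "('k::field, 'a) alg \<Rightarrow> 'a set \<Rightarrow> bool" where
  "lie_ideal L I \<longleftrightarrow> subspace_of L I \<and> (\<forall>x\<in>lcarrier L. \<forall>y\<in>I. lbr L x y \<in> I)"

definition two_sided_ideal :: "('k::field, 'a) alg \<Rightarrow> 'a set \<Rightarrow> bool" where
  "two_sided_ideal L I \<longleftrightarrow> subspace_of L I \<and>
     (\<forall>x\<in>lcarrier L. \<forall>y\<in>I. lbr L x y \<in> I \<and> lbr L y x \<in> I)"

text \<open>Lower central series: lcs L 1 = L, lcs L (i+1) = [L, lcs L i] (span of brackets).
  (Index 0 is given the value L as well; it is never used.)\<close>
primrec lcs :: "('k::field, 'a) alg \<Rightarrow> nat \<Rightarrow> 'a set" where
  "lcs L 0 = lcarrier L"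
| "lcs L (Suc i) = (if i = 0 then lcarrier L
      else lspan L {lbr L x y | x y. x \<in> lcarrier L \<and> y \<in> lcs L i})"

definition lcoset :: "('k::field, 'a) alg \<Rightarrow> 'a set \<Rightarrow> 'a \<Rightarrow> 'a set" where
  "lcoset L I x = (\<lambda>i. ladd L x i) ` I"

definition lrep :: "'a set \<Rightarrow> 'a" where
  "lrep A = (SOME x. x \<in> A)"

definition lie_quot :: "('k::field, 'a) alg \<Rightarrow> 'a set \<Rightarrow> ('k, 'a set) alg" where
  "lie_quot L I = \<lparr> lcarrier = lcoset L I ` lcarrier L,
      lzero = lcoset L I (lzero L),
      ladd = (\<lambda>A B. lcoset L I (ladd L (lrep A) (lrep B))),
      lsmult = (\<lambda>c A. lcoset L I (lsmult L c (lrep A))),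
      lbr = (\<lambda>A B. lcoset L I (lbr L (lrep A) (lrep B))) \<rparr>"

definition lie_auts :: "('k::field, 'a) alg \<Rightarrow> ('a \<Rightarrow> 'a) set" where
  "lie_auts L = {f \<in> Bij (lcarrier L).
      (\<forall>x\<in>lcarrier L. \<forall>y\<in>lcarrier L. f (ladd L x y) = ladd L (f x) (f y)) \<and>
      (\<forall>c. \<forall>x\<in>lcarrier L. f (lsmult L c x) = lsmult L c (f x)) \<and>
      (\<forall>x\<in>lcarrier L. \<forall>y\<in>lcarrier L. f (lbr L x y) = lbr L (f x) (f y))}"

definition Aut :: "('k::field, 'a) alg \<Rightarrow> ('a \<Rightarrow> 'a) monoid" where
  "Aut L = (BijGroup (lcarrier L)) \<lparr>carrier := lie_auts L\<rparr>"

definition Aut_t :: "('k::field, 'a) alg \<Rightarrow> 'a set \<Rightarrow> ('a \<Rightarrow> 'a) monoid" where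
  "Aut_t L T = (Aut L) \<lparr>carrier := {\<Phi> \<in> carrier (Aut L). \<Phi> ` T \<subseteq> T}\<rparr>"

definition Aut0_t :: "('k::field, 'a) alg \<Rightarrow> 'a set \<Rightarrow> ('a \<Rightarrow> 'a) set" where
  "Aut0_t L T = {\<Phi> \<in> carrier (Aut L). (\<lambda>x. lsub L (\<Phi> x) x) ` lcarrier L \<subseteq> T}"

text \<open>Free magma on generators 0..d-1 (binary trees), and the free non-associative
  algebra on it: finitely supported coefficient functions on trees with leaves < d.
  The product is the bilinear extension of tree grafting.\<close>
datatype tree = Leaf nat | Node tree tree

primrec leaves :: "tree \<Rightarrow> nat set" where
  "leaves (Leaf i) = {i}"
| "leaves (Node a b) = leaves a \<union> leaves b"

definition free_magma_alg :: "nat \<Rightarrow> ('k::field, tree \<Rightarrow> 'k) alg" where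
  "free_magma_alg d = \<lparr> lcarrier = {f. finite {s. f s \<noteq> 0} \<and> (\<forall>s. f s \<noteq> 0 \<longrightarrow> leaves s \<subseteq> {..<d})},
      lzero = (\<lambda>_. 0),
      ladd = (\<lambda>f g s. f s + g s),
      lsmult = (\<lambda>c f s. c * f s),
      lbr = (\<lambda>f g s. case s of Leaf _ \<Rightarrow> 0 | Node a b \<Rightarrow> f a * g b) \<rparr>"

definition lie_relations :: "('k::field, 'a) alg \<Rightarrow> 'a set" where
  "lie_relations M = {lbr M a a | a. a \<in> lcarrier M} \<union>
     {ladd M (ladd M (lbr M a (lbr M b c)) (lbr M b (lbr M c a))) (lbr M c (lbr M a b))
        | a b c. a \<in> lcarrier M \<and> b \<in> lcarrier M \<and> c \<in> lcarrier M}"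

definition gen_two_sided_ideal :: "('k::field, 'a) alg \<Rightarrow> 'a set \<Rightarrow> 'a set" where
  "gen_two_sided_ideal M S = \<Inter>{I. two_sided_ideal M I \<and> S \<subseteq> I}"

text \<open>Free Lie algebra FL(U) on U = {x_0, ..., x_(d-1)} (x_i the class of Leaf i).\<close>
definition free_lie :: "nat \<Rightarrow> ('k::field, (tree \<Rightarrow> 'k) set) alg" where
  "free_lie d = lie_quot (free_magma_alg d)
      (gen_two_sided_ideal (free_magma_alg d) (lie_relations (free_magma_alg d)))"

definition free_nilpotent :: "nat \<Rightarrow> nat \<Rightarrow> ('k::field, (tree \<Rightarrow> 'k) set set) alg" where
  "free_nilpotent d t = lie_quot (free_lie d) (lcs (free_lie d) (t + 1))"

end

theory Submission
  imports Defs "Jordan_Normal_Form.VS_Connect"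
begin

text \<open>
  An automorphism of \<open>n = n\<^sub>d\<^sub>,\<^sub>t\<close> that maps \<open>t\<close> into itself induces an automorphism
  of \<open>n/t\<close>; this gives a group homomorphism \<open>Aut\<^sub>t n \<rightarrow> Aut (n/t)\<close> whose kernel is
  \<open>Aut\<^sup>\<circ>\<^sub>t n\<close>. It is onto: given \<open>\<phi> \<in> Aut (n/t)\<close>, the universal property of the free
  nilpotent algebra yields an endomorphism \<open>\<Phi>\<close> of \<open>n\<close> sending each generator to a preimage of
  its image under \<open>\<phi>\<close>. Then \<open>\<Phi>\<close> is surjective modulo \<open>t \<subseteq> [n,n]\<close>, hence surjective because
  \<open>n\<close> is nilpotent, hence bijective because \<open>n\<close> is finite-dimensional, and it induces \<open>\<phi>\<close>.
  The first isomorphism theorem concludes.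
\<close>

abbreviation lneg :: "('k::field, 'a) alg \<Rightarrow> 'a \<Rightarrow> 'a" where
  "lneg L x \<equiv> lsmult L (-1) x"

declare lcs.simps(2)[simp del]

lemma lcs_Suc_0[simp]: "lcs L (Suc 0) = lcarrier L"
  by (simp add: lcs.simps(2))

lemma lcs_Suc_Suc:
  "lcs L (Suc (Suc i)) = lspan L {lbr L x y | x y. x \<in> lcarrier L \<and> y \<in> lcs L (Suc i)}"
  by (simp add: lcs.simps(2))

locale nonassoc_algebra =
  fixes L :: "('k::field, 'a) alg"
  assumes zero_closed[simp, intro]: "lzero L \<in> lcarrier L"
    and add_closed[simp, intro]:
      "x \<in> lcarrier L \<Longrightarrow> y \<in> lcarrier L \<Longrightarrow> ladd L x y \<in> lcarrier L"
    and smult_closed[simp, intro]: "x \<in> lcarrier L \<Longrightarrow> lsmult L c x \<in> lcarrier L"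
    and br_closed[simp, intro]:
      "x \<in> lcarrier L \<Longrightarrow> y \<in> lcarrier L \<Longrightarrow> lbr L x y \<in> lcarrier L"
    and add_assoc: "x \<in> lcarrier L \<Longrightarrow> y \<in> lcarrier L \<Longrightarrow> z \<in> lcarrier L \<Longrightarrow>
      ladd L (ladd L x y) z = ladd L x (ladd L y z)"
    and add_comm: "x \<in> lcarrier L \<Longrightarrow> y \<in> lcarrier L \<Longrightarrow> ladd L x y = ladd L y x"
    and add_zero[simp]: "x \<in> lcarrier L \<Longrightarrow> ladd L x (lzero L) = x"
    and add_neg[simp]: "x \<in> lcarrier L \<Longrightarrow> ladd L x (lneg L x) = lzero L"
    and smult_add: "x \<in> lcarrier L \<Longrightarrow> y \<in> lcarrier L \<Longrightarrow>
      lsmult L c (ladd L x y) = ladd L (lsmult L c x) (lsmult L c y)"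
    and add_smult: "x \<in> lcarrier L \<Longrightarrow> lsmult L (a + b) x = ladd L (lsmult L a x) (lsmult L b x)"
    and smult_smult[simp]: "x \<in> lcarrier L \<Longrightarrow> lsmult L a (lsmult L b x) = lsmult L (a * b) x"
    and smult_one[simp]: "x \<in> lcarrier L \<Longrightarrow> lsmult L 1 x = x"
    and br_add_left: "x \<in> lcarrier L \<Longrightarrow> y \<in> lcarrier L \<Longrightarrow> z \<in> lcarrier L \<Longrightarrow>
      lbr L (ladd L x y) z = ladd L (lbr L x z) (lbr L y z)"
    and br_add_right: "x \<in> lcarrier L \<Longrightarrow> y \<in> lcarrier L \<Longrightarrow> z \<in> lcarrier L \<Longrightarrow>
      lbr L x (ladd L y z) = ladd L (lbr L x y) (lbr L x z)"
    and br_smult_left: "x \<in> lcarrier L \<Longrightarrow> y \<in> lcarrier L \<Longrightarrow>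
      lbr L (lsmult L c x) y = lsmult L c (lbr L x y)"
    and br_smult_right: "x \<in> lcarrier L \<Longrightarrow> y \<in> lcarrier L \<Longrightarrow>
      lbr L x (lsmult L c y) = lsmult L c (lbr L x y)"
begin

lemma add_left_comm: "x \<in> lcarrier L \<Longrightarrow> y \<in> lcarrier L \<Longrightarrow> z \<in> lcarrier L \<Longrightarrow>
    ladd L x (ladd L y z) = ladd L y (ladd L x z)"
  by (metis add_assoc add_comm)

lemmas add_ac = add_assoc add_comm add_left_comm

lemma zero_add[simp]: "x \<in> lcarrier L \<Longrightarrow> ladd L (lzero L) x = x"
  using add_comm add_zero by auto

lemma neg_add[simp]: "x \<in> lcarrier L \<Longrightarrow> ladd L (lneg L x) x = lzero L"
  using add_comm add_neg by (metis smult_closed)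

lemma add_neg_cancel_left[simp]:
  "x \<in> lcarrier L \<Longrightarrow> y \<in> lcarrier L \<Longrightarrow> ladd L x (ladd L (lneg L x) y) = y"
  by (metis add_assoc add_neg smult_closed zero_add)

lemma neg_add_cancel_left[simp]:
  "x \<in> lcarrier L \<Longrightarrow> y \<in> lcarrier L \<Longrightarrow> ladd L (lneg L x) (ladd L x y) = y"
  by (metis add_assoc neg_add smult_closed zero_add)

lemma add_left_imp_eq: "a \<in> lcarrier L \<Longrightarrow> x \<in> lcarrier L \<Longrightarrow> y \<in> lcarrier L \<Longrightarrow>
    ladd L a x = ladd L a y \<Longrightarrow> x = y"
  by (metis neg_add_cancel_left)

lemma add_self_eq_zero: "x \<in> lcarrier L \<Longrightarrow> ladd L x x = x \<Longrightarrow> x = lzero L"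
  by (metis add_left_imp_eq add_zero zero_closed)

lemma smult_zero_left[simp]: "x \<in> lcarrier L \<Longrightarrow> lsmult L 0 x = lzero L"
  by (metis add_self_eq_zero add_smult add_0 smult_closed)

lemma smult_zero_right[simp]: "lsmult L c (lzero L) = lzero L"
  by (metis add_self_eq_zero add_zero smult_add smult_closed zero_closed)

lemma br_zero_left[simp]: "x \<in> lcarrier L \<Longrightarrow> lbr L (lzero L) x = lzero L"
  by (metis add_self_eq_zero add_zero br_add_left br_closed zero_closed)

lemma br_zero_right[simp]: "x \<in> lcarrier L \<Longrightarrow> lbr L x (lzero L) = lzero L"
  by (metis add_self_eq_zero add_zero br_add_right br_closed zero_closed)

lemma sub_closed[simp, intro]: "x \<in> lcarrier L \<Longrightarrow> y \<in> lcarrier L \<Longrightarrow> lsub L x y \<in> lcarrier L"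
  by (simp add: lsub_def)

lemma add_sub_cancel: "x \<in> lcarrier L \<Longrightarrow> y \<in> lcarrier L \<Longrightarrow> ladd L y (lsub L x y) = x"
  unfolding lsub_def by (metis add_left_comm add_neg add_zero smult_closed)

lemma sub_self[simp]: "x \<in> lcarrier L \<Longrightarrow> lsub L x x = lzero L"
  by (simp add: lsub_def)

lemma sub_eq_zero_iff: "x \<in> lcarrier L \<Longrightarrow> y \<in> lcarrier L \<Longrightarrow> lsub L x y = lzero L \<longleftrightarrow> x = y"
  by (metis add_sub_cancel add_zero sub_self)

lemma add_eq_zero_imp_eq_neg:
  "x \<in> lcarrier L \<Longrightarrow> y \<in> lcarrier L \<Longrightarrow> ladd L x y = lzero L \<Longrightarrow> y = lneg L x"
  by (metis add_zero neg_add_cancel_left smult_closed)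

lemma sub_add_add: "a \<in> lcarrier L \<Longrightarrow> b \<in> lcarrier L \<Longrightarrow> c \<in> lcarrier L \<Longrightarrow> d \<in> lcarrier L \<Longrightarrow>
    lsub L (ladd L a b) (ladd L c d) = ladd L (lsub L a c) (lsub L b d)"
  unfolding lsub_def by (simp add: smult_add add_ac)

lemma sub_smult_smult: "a \<in> lcarrier L \<Longrightarrow> b \<in> lcarrier L \<Longrightarrow>
    lsub L (lsmult L c a) (lsmult L c b) = lsmult L c (lsub L a b)"
  unfolding lsub_def by (simp add: smult_add mult.commute)

lemma sub_br_br: "a \<in> lcarrier L \<Longrightarrow> b \<in> lcarrier L \<Longrightarrow> c \<in> lcarrier L \<Longrightarrow> d \<in> lcarrier L \<Longrightarrow>
    lsub L (lbr L a b) (lbr L c d) = ladd L (lbr L (lsub L a c) b) (lbr L c (lsub L b d))"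
proof -
  assume abcd: "a \<in> lcarrier L" "b \<in> lcarrier L" "c \<in> lcarrier L" "d \<in> lcarrier L"
  have "ladd L (lbr L (lsub L a c) b) (lbr L c (lsub L b d)) =
      ladd L (ladd L (lbr L a b) (lneg L (lbr L c b))) (ladd L (lbr L c b) (lneg L (lbr L c d)))"
    using abcd unfolding lsub_def
      by (simp add: br_add_left br_add_right br_smult_left br_smult_right)
  also have "\<dots> = ladd L (lbr L a b) (lneg L (lbr L c d))"
    using abcd by (simp add: add_assoc)
  finally show ?thesis unfolding lsub_def by simp
qed

lemma subspaceD:
  assumes "subspace_of L V"
  shows "V \<subseteq> lcarrier L" "lzero L \<in> V" "\<And>x y. x \<in> V \<Longrightarrow> y \<in> V \<Longrightarrow> ladd L x y \<in> V"
    "\<And>x c. x \<in> V \<Longrightarrow> lsmult L c x \<in> V"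
  using assms unfolding subspace_of_def by auto

lemma subspace_carrier: "subspace_of L (lcarrier L)"
  unfolding subspace_of_def by auto

lemma subspace_zero: "subspace_of L {lzero L}"
  unfolding subspace_of_def by auto

lemma subspace_lspan: "S \<subseteq> lcarrier L \<Longrightarrow> subspace_of L (lspan L S)"
proof -
  assume "S \<subseteq> lcarrier L"
  then have "lspan L S \<subseteq> lcarrier L" unfolding lspan_def using subspace_carrier by blast
  then show ?thesis unfolding subspace_of_def lspan_def by blast
qed

lemma lspan_least: "subspace_of L V \<Longrightarrow> S \<subseteq> V \<Longrightarrow> lspan L S \<subseteq> V"
  unfolding lspan_def by blast

lemma lspan_superset: "S \<subseteq> lspan L S"
  unfolding lspan_def by blast

lemma subspace_lcs: "subspace_of L (lcs L k)"
proof (induction k rule: nat.induct)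
  case (Suc k)
  show ?case
  proof (cases k)
    case (Suc j)
    have "{lbr L x y | x y. x \<in> lcarrier L \<and> y \<in> lcs L (Suc j)} \<subseteq> lcarrier L"
      using subspaceD(1)[OF Suc.IH] Suc by auto
    then show ?thesis unfolding Suc lcs_Suc_Suc by (rule subspace_lspan)
  qed (simp add: subspace_carrier)
qed (simp add: subspace_carrier)

lemma lcs_subset_carrier: "lcs L k \<subseteq> lcarrier L"
  by (rule subspaceD(1)[OF subspace_lcs])

lemma lcs_br: "x \<in> lcarrier L \<Longrightarrow> y \<in> lcs L (Suc k) \<Longrightarrow> lbr L x y \<in> lcs L (Suc (Suc k))"
  unfolding lcs_Suc_Suc by (rule subsetD[OF lspan_superset]) blast

lemma lcs_Suc_Suc_least:
  "subspace_of L V \<Longrightarrow> (\<And>x y. x \<in> lcarrier L \<Longrightarrow> y \<in> lcs L (Suc k) \<Longrightarrow> lbr L x y \<in> V)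
   \<Longrightarrow> lcs L (Suc (Suc k)) \<subseteq> V"
  unfolding lcs_Suc_Suc by (rule lspan_least) blast+

lemma lcs_Suc_subset: "lcs L (Suc k) \<subseteq> lcs L k"
proof (induction k)
  case 0 then show ?case by simp
next
  case (Suc k)
  show ?case
  proof (cases k)
    case 0 then show ?thesis using lcs_subset_carrier by simp
  next
    case (Suc j)
    have "lcs L (Suc (Suc (Suc j))) \<subseteq> lcs L (Suc (Suc j))"
    proof (rule lcs_Suc_Suc_least[OF subspace_lcs])
      fix x y assume "x \<in> lcarrier L" "y \<in> lcs L (Suc (Suc j))"
      then have "y \<in> lcs L (Suc j)" using Suc.IH Suc by blast
      then show "lbr L x y \<in> lcs L (Suc (Suc j))" using lcs_br \<open>x \<in> lcarrier L\<close> by blast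
    qed
    then show ?thesis unfolding Suc .
  qed
qed

lemma lcs_antimono: "i \<le> j \<Longrightarrow> lcs L j \<subseteq> lcs L i"
proof (induction j rule: dec_induct)
  case (step n)
  then show ?case using lcs_Suc_subset[of n] by blast
qed simp

lemma two_sided_ideal_Inter:
  assumes "F \<noteq> {}" and ideals: "\<And>I. I \<in> F \<Longrightarrow> two_sided_ideal L I"
  shows "two_sided_ideal L (\<Inter>F)"
proof -
  obtain I0 where I0: "I0 \<in> F" using assms(1) by blast
  have sub: "subspace_of L I" if "I \<in> F" for I
    using ideals[OF that] unfolding two_sided_ideal_def by blast
  show ?thesis
    unfolding two_sided_ideal_def subspace_of_def
  proof (intro conjI ballI allI)
    show "\<Inter>F \<subseteq> lcarrier L" using subspaceD(1)[OF sub[OF I0]] I0 by blast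
    show "lzero L \<in> \<Inter>F" using subspaceD(2)[OF sub] by blast
    fix x y assume "x \<in> \<Inter>F" "y \<in> \<Inter>F"
    then show "ladd L x y \<in> \<Inter>F" using subspaceD(3)[OF sub] by blast
  next
    fix c x assume "x \<in> \<Inter>F"
    then show "lsmult L c x \<in> \<Inter>F" using subspaceD(4)[OF sub] by blast
  next
    fix x y assume "x \<in> lcarrier L" "y \<in> \<Inter>F"
    then show "lbr L x y \<in> \<Inter>F" "lbr L y x \<in> \<Inter>F"
      using ideals unfolding two_sided_ideal_def by blast+
  qed
qed

lemma two_sided_ideal_gen: "S \<subseteq> lcarrier L \<Longrightarrow> two_sided_ideal L (gen_two_sided_ideal L S)"
  unfolding gen_two_sided_ideal_def
proof (rule two_sided_ideal_Inter)
  assume "S \<subseteq> lcarrier L"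
  then have "lcarrier L \<in> {I. two_sided_ideal L I \<and> S \<subseteq> I}"
    unfolding two_sided_ideal_def using subspace_carrier by auto
  then show "{I. two_sided_ideal L I \<and> S \<subseteq> I} \<noteq> {}" by blast
qed blast

lemma gen_two_sided_ideal_superset: "S \<subseteq> gen_two_sided_ideal L S"
  unfolding gen_two_sided_ideal_def by blast

lemma gen_two_sided_ideal_least: "two_sided_ideal L I \<Longrightarrow> S \<subseteq> I \<Longrightarrow> gen_two_sided_ideal L S \<subseteq> I"
  unfolding gen_two_sided_ideal_def by blast

lemma lie_relations_subset: "lie_relations L \<subseteq> lcarrier L"
  unfolding lie_relations_def by auto

end

locale lie_algebra = nonassoc_algebra +
  assumes br_self[simp]: "x \<in> lcarrier L \<Longrightarrow> lbr L x x = lzero L"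
    and jacobi: "x \<in> lcarrier L \<Longrightarrow> y \<in> lcarrier L \<Longrightarrow> z \<in> lcarrier L \<Longrightarrow>
      ladd L (ladd L (lbr L x (lbr L y z)) (lbr L y (lbr L z x))) (lbr L z (lbr L x y)) = lzero L"
begin

lemma br_antisym: "x \<in> lcarrier L \<Longrightarrow> y \<in> lcarrier L \<Longrightarrow> lbr L y x = lneg L (lbr L x y)"
proof -
  assume xy: "x \<in> lcarrier L" "y \<in> lcarrier L"
  have "lzero L = lbr L (ladd L x y) (ladd L x y)" using xy by simp
  also have "\<dots> = ladd L (lbr L x (ladd L x y)) (lbr L y (ladd L x y))"
    using xy by (intro br_add_left) auto
  also have "\<dots> = ladd L (ladd L (lbr L x x) (lbr L x y)) (ladd L (lbr L y x) (lbr L y y))"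
    using xy by (simp only: br_add_right)
  also have "\<dots> = ladd L (lbr L x y) (lbr L y x)" using xy by simp
  finally have "ladd L (lbr L x y) (lbr L y x) = lzero L" by simp
  then show ?thesis using xy by (intro add_eq_zero_imp_eq_neg) simp_all
qed

lemma br_br_left: "a \<in> lcarrier L \<Longrightarrow> b \<in> lcarrier L \<Longrightarrow> y \<in> lcarrier L \<Longrightarrow>
    lbr L (lbr L a b) y = ladd L (lbr L a (lbr L b y)) (lbr L b (lbr L y a))"
proof -
  assume aby: "a \<in> lcarrier L" "b \<in> lcarrier L" "y \<in> lcarrier L"
  have "lbr L y (lbr L a b) = lneg L (ladd L (lbr L a (lbr L b y)) (lbr L b (lbr L y a)))"
    using add_eq_zero_imp_eq_neg[OF _ _ jacobi[OF aby]] aby by simp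
  then show ?thesis using aby br_antisym[of y "lbr L a b"] by simp
qed

lemma lie_ideal_imp_two_sided_ideal: "lie_ideal L I \<Longrightarrow> two_sided_ideal L I"
  unfolding lie_ideal_def two_sided_ideal_def
proof (intro conjI ballI; (elim conjE)?)
  fix x y assume I: "subspace_of L I" and brI: "\<forall>x\<in>lcarrier L. \<forall>y\<in>I. lbr L x y \<in> I"
    and x: "x \<in> lcarrier L" and y: "y \<in> I"
  have "y \<in> lcarrier L" using y subspaceD(1)[OF I] by auto
  then show "lbr L y x \<in> I" using br_antisym[OF x] brI x y subspaceD(4)[OF I] by simp
qed auto

lemma two_sided_ideal_lcs: "two_sided_ideal L (lcs L k)"
  unfolding two_sided_ideal_def
proof (intro conjI ballI)
  show "subspace_of L (lcs L k)" by (rule subspace_lcs)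
  fix x y assume x: "x \<in> lcarrier L" and y: "y \<in> lcs L k"
  have yC: "y \<in> lcarrier L" using y lcs_subset_carrier by auto
  show xy: "lbr L x y \<in> lcs L k"
  proof (cases k)
    case (Suc j)
    then show ?thesis using lcs_br[OF x] y lcs_Suc_subset by blast
  qed (use x yC in simp)
  show "lbr L y x \<in> lcs L k" using br_antisym[OF x yC] xy subspaceD(4)[OF subspace_lcs] by simp
qed

lemma lcs_br_lcs:
  "x \<in> lcs L (Suc i) \<Longrightarrow> y \<in> lcs L (Suc j) \<Longrightarrow> lbr L x y \<in> lcs L (Suc (Suc (i + j)))"
proof (induction i arbitrary: j x y)
  case 0
  then show ?case using lcs_br[of x y j] by simp
next
  case (Suc i)
  have yC: "y \<in> lcarrier L" using Suc.prems lcs_subset_carrier by auto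
  let ?V = "{x \<in> lcarrier L. lbr L x y \<in> lcs L (Suc (Suc (Suc i + j)))}"
  have V: "subspace_of L ?V"
    using subspaceD[OF subspace_lcs[of "Suc (Suc (Suc i + j))"]] yC
    unfolding subspace_of_def by (auto simp: br_add_left br_smult_left)
  have "lcs L (Suc (Suc i)) \<subseteq> ?V"
  proof (rule lcs_Suc_Suc_least[OF V])
    fix a b assume a: "a \<in> lcarrier L" and b: "b \<in> lcs L (Suc i)"
    have bC: "b \<in> lcarrier L" using b lcs_subset_carrier by auto
    have "lbr L a (lbr L b y) \<in> lcs L (Suc (Suc (Suc i + j)))"
      using lcs_br[OF a Suc.IH[OF b Suc.prems(2)]] by simp
    moreover have ya: "lbr L y a \<in> lcs L (Suc (Suc j))"
      using br_antisym[OF a yC] lcs_br[OF a Suc.prems(2)] subspaceD(4)[OF subspace_lcs] by simp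
    have "lbr L b (lbr L y a) \<in> lcs L (Suc (Suc (Suc i + j)))"
      using Suc.IH[OF b ya] by simp
    ultimately show "lbr L a b \<in> ?V"
      using br_br_left[OF a bC yC] subspaceD[OF subspace_lcs] a bC yC by simp
  qed
  then show ?case using Suc.prems by auto
qed

end

definition is_lin :: "('k::field, 'a) alg \<Rightarrow> ('k, 'b) alg \<Rightarrow> ('a \<Rightarrow> 'b) \<Rightarrow> bool" where
  "is_lin L L' h \<longleftrightarrow> (\<forall>x\<in>lcarrier L. h x \<in> lcarrier L') \<and>
     (\<forall>x\<in>lcarrier L. \<forall>y\<in>lcarrier L. h (ladd L x y) = ladd L' (h x) (h y)) \<and>
     (\<forall>c. \<forall>x\<in>lcarrier L. h (lsmult L c x) = lsmult L' c (h x))"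

definition is_hom :: "('k::field, 'a) alg \<Rightarrow> ('k, 'b) alg \<Rightarrow> ('a \<Rightarrow> 'b) \<Rightarrow> bool" where
  "is_hom L L' h \<longleftrightarrow> is_lin L L' h \<and>
     (\<forall>x\<in>lcarrier L. \<forall>y\<in>lcarrier L. h (lbr L x y) = lbr L' (h x) (h y))"

lemma is_linD:
  assumes "is_lin L L' h"
  shows "x \<in> lcarrier L \<Longrightarrow> h x \<in> lcarrier L'"
    "x \<in> lcarrier L \<Longrightarrow> y \<in> lcarrier L \<Longrightarrow> h (ladd L x y) = ladd L' (h x) (h y)"
    "x \<in> lcarrier L \<Longrightarrow> h (lsmult L c x) = lsmult L' c (h x)"
  using assms unfolding is_lin_def by auto

lemma is_homD:
  assumes "is_hom L L' h"
  shows "x \<in> lcarrier L \<Longrightarrow> h x \<in> lcarrier L'"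
    "x \<in> lcarrier L \<Longrightarrow> y \<in> lcarrier L \<Longrightarrow> h (ladd L x y) = ladd L' (h x) (h y)"
    "x \<in> lcarrier L \<Longrightarrow> h (lsmult L c x) = lsmult L' c (h x)"
    "x \<in> lcarrier L \<Longrightarrow> y \<in> lcarrier L \<Longrightarrow> h (lbr L x y) = lbr L' (h x) (h y)"
    "is_lin L L' h"
  using assms unfolding is_hom_def is_lin_def by auto

lemma is_hom_comp:
  "is_hom L1 L2 h \<Longrightarrow> is_hom L2 L3 g \<Longrightarrow> is_hom L1 L3 (\<lambda>x. g (h x))"
  unfolding is_hom_def is_lin_def by auto

lemma is_hom_cong:
  assumes L: "nonassoc_algebra L" and h: "is_hom L L' h"
    and eq: "\<And>x. x \<in> lcarrier L \<Longrightarrow> h' x = h x"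
  shows "is_hom L L' h'"
  using is_homD[OF h] eq unfolding is_hom_def is_lin_def
  by (auto simp: nonassoc_algebra.add_closed[OF L] nonassoc_algebra.smult_closed[OF L]
      nonassoc_algebra.br_closed[OF L])

lemma is_lin_zero:
  assumes "nonassoc_algebra L" "nonassoc_algebra L'" "is_lin L L' h"
  shows "h (lzero L) = lzero L'"
proof -
  interpret A: nonassoc_algebra L by fact
  interpret B: nonassoc_algebra L' by fact
  have "h (lzero L) = h (lsmult L 0 (lzero L))" by simp
  also have "\<dots> = lsmult L' 0 (h (lzero L))" using is_linD(3)[OF assms(3) A.zero_closed] by blast
  also have "\<dots> = lzero L'" using is_linD(1)[OF assms(3)] by simp
  finally show ?thesis .
qed

lemma is_lin_sub:
  assumes "nonassoc_algebra L" "is_lin L L' h" "x \<in> lcarrier L" "y \<in> lcarrier L"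
  shows "h (lsub L x y) = lsub L' (h x) (h y)"
  using assms is_linD[OF assms(2)] unfolding lsub_def by (simp add: nonassoc_algebra.smult_closed)

lemma is_lin_inj_on_if_kernel_trivial:
  assumes L: "nonassoc_algebra L" and L': "nonassoc_algebra L'" and f: "is_lin L L' f"
    and ker: "\<And>x. x \<in> lcarrier L \<Longrightarrow> f x = lzero L' \<Longrightarrow> x = lzero L"
  shows "inj_on f (lcarrier L)"
proof (rule inj_onI)
  interpret A: nonassoc_algebra L by fact
  interpret B: nonassoc_algebra L' by fact
  fix x y assume x: "x \<in> lcarrier L" and y: "y \<in> lcarrier L" and e: "f x = f y"
  have "f (lsub L x y) = lsub L' (f x) (f y)" by (rule is_lin_sub[OF L f x y])
  also have "\<dots> = lzero L'" using e is_linD(1)[OF f y] by simp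
  finally have "lsub L x y = lzero L" using ker x y by simp
  then show "x = y" using A.sub_eq_zero_iff x y by simp
qed

lemma subspace_vimage:
  assumes "nonassoc_algebra L" "nonassoc_algebra L'" "is_lin L L' h" "subspace_of L' V"
  shows "subspace_of L {x \<in> lcarrier L. h x \<in> V}"
  using assms is_lin_zero[OF assms(1-3)] is_linD[OF assms(3)]
  unfolding subspace_of_def
  by (auto simp: nonassoc_algebra.zero_closed nonassoc_algebra.add_closed
      nonassoc_algebra.smult_closed)

lemma subspace_image:
  assumes "nonassoc_algebra L" "nonassoc_algebra L'" "is_lin L L' h" "subspace_of L V"
  shows "subspace_of L' (h ` V)"
proof -
  have V: "V \<subseteq> lcarrier L" using assms(4) unfolding subspace_of_def by auto
  show ?thesis
    unfolding subspace_of_def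
  proof (intro conjI ballI allI)
    show "h ` V \<subseteq> lcarrier L'" using V is_linD(1)[OF assms(3)] by auto
    show "lzero L' \<in> h ` V" using is_lin_zero[OF assms(1-3), symmetric] assms(4)
      unfolding subspace_of_def by auto
    fix x y assume "x \<in> h ` V" "y \<in> h ` V"
    then obtain a b where "a \<in> V" "b \<in> V" "x = h a" "y = h b" by auto
    then show "ladd L' x y \<in> h ` V" using V is_linD(2)[OF assms(3), of a b] assms(4)
      unfolding subspace_of_def by (metis image_eqI subsetD)
  next
    fix c x assume "x \<in> h ` V"
    then obtain a where "a \<in> V" "x = h a" by auto
    then show "lsmult L' c x \<in> h ` V" using V is_linD(3)[OF assms(3), of a c] assms(4)
      unfolding subspace_of_def by (metis image_eqI subsetD)
  qed
qed

lemma is_hom_image_lcs: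
  assumes "nonassoc_algebra L" "nonassoc_algebra L'" "is_hom L L' h"
  shows "h ` lcs L k \<subseteq> lcs L' k"
proof (induction k)
  case 0 then show ?case using is_homD(1)[OF assms(3)] by auto
next
  case (Suc k)
  interpret A: nonassoc_algebra L by fact
  interpret B: nonassoc_algebra L' by fact
  show ?case
  proof (cases k)
    case 0 then show ?thesis using is_homD(1)[OF assms(3)] by auto
  next
    case (Suc j)
    let ?V = "{x \<in> lcarrier L. h x \<in> lcs L' (Suc (Suc j))}"
    have V: "subspace_of L ?V"
      by (rule subspace_vimage[OF assms(1,2) is_homD(5)[OF assms(3)] B.subspace_lcs])
    have "lcs L (Suc (Suc j)) \<subseteq> ?V"
    proof (rule A.lcs_Suc_Suc_least[OF V])
      fix x y assume x: "x \<in> lcarrier L" and y: "y \<in> lcs L (Suc j)"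
      have yC: "y \<in> lcarrier L" using y A.lcs_subset_carrier by auto
      have "h y \<in> lcs L' (Suc j)" using Suc.IH Suc y by auto
      then have "lbr L' (h x) (h y) \<in> lcs L' (Suc (Suc j))"
        using B.lcs_br is_homD(1)[OF assms(3) x] by blast
      then show "lbr L x y \<in> ?V" using is_homD(4)[OF assms(3) x yC] x yC by simp
    qed
    then show ?thesis using Suc by auto
  qed
qed

lemma lcs_subset_image_surj_hom:
  assumes "nonassoc_algebra L" "nonassoc_algebra L'" "is_hom L L' h"
    and surj: "h ` lcarrier L = lcarrier L'"
  shows "lcs L' k \<subseteq> h ` lcs L k"
proof (induction k)
  case 0 then show ?case using surj by simp
next
  case (Suc k)
  interpret A: nonassoc_algebra L by fact
  interpret B: nonassoc_algebra L' by fact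
  show ?case
  proof (cases k)
    case 0 then show ?thesis using surj by simp
  next
    case (Suc j)
    have V: "subspace_of L' (h ` lcs L (Suc (Suc j)))"
      by (rule subspace_image[OF assms(1,2) is_homD(5)[OF assms(3)] A.subspace_lcs])
    have "lcs L' (Suc (Suc j)) \<subseteq> h ` lcs L (Suc (Suc j))"
    proof (rule B.lcs_Suc_Suc_least[OF V])
      fix x y assume x: "x \<in> lcarrier L'" and y: "y \<in> lcs L' (Suc j)"
      obtain a where a: "a \<in> lcarrier L" "x = h a" using x surj by auto
      obtain b where b: "b \<in> lcs L (Suc j)" "y = h b" using y Suc.IH Suc by auto
      have bC: "b \<in> lcarrier L" using b A.lcs_subset_carrier by auto
      have "lbr L a b \<in> lcs L (Suc (Suc j))" using A.lcs_br a b by blast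
      then show "lbr L' x y \<in> h ` lcs L (Suc (Suc j))"
        using is_homD(4)[OF assms(3) a(1) bC] a b by (metis image_eqI)
    qed
    then show ?thesis using Suc by auto
  qed
qed

lemma two_sided_ideal_kernel:
  assumes "nonassoc_algebra L" "nonassoc_algebra L'" "is_hom L L' h"
  shows "two_sided_ideal L {x \<in> lcarrier L. h x = lzero L'}"
proof -
  interpret A: nonassoc_algebra L by fact
  interpret B: nonassoc_algebra L' by fact
  have s: "subspace_of L {x \<in> lcarrier L. h x \<in> {lzero L'}}"
    by (rule subspace_vimage[OF assms(1,2) is_homD(5)[OF assms(3)] B.subspace_zero])
  show ?thesis unfolding two_sided_ideal_def
    using s is_homD[OF assms(3)] by auto
qed

locale quotient_algebra = nonassoc_algebra L for L :: "('k::field, 'a) alg" +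
  fixes I :: "'a set"
  assumes ideal: "two_sided_ideal L I"
begin

lemma subspace_ideal: "subspace_of L I"
  using ideal unfolding two_sided_ideal_def by auto

lemma ideal_subset: "I \<subseteq> lcarrier L"
  using subspaceD(1)[OF subspace_ideal] .

lemma ideal_add: "x \<in> I \<Longrightarrow> y \<in> I \<Longrightarrow> ladd L x y \<in> I"
  using subspaceD(3)[OF subspace_ideal] .

lemma ideal_smult: "x \<in> I \<Longrightarrow> lsmult L c x \<in> I"
  using subspaceD(4)[OF subspace_ideal] .

lemma ideal_br_left: "x \<in> lcarrier L \<Longrightarrow> y \<in> I \<Longrightarrow> lbr L x y \<in> I"
  using ideal unfolding two_sided_ideal_def by auto

lemma ideal_br_right: "x \<in> lcarrier L \<Longrightarrow> y \<in> I \<Longrightarrow> lbr L y x \<in> I"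
  using ideal unfolding two_sided_ideal_def by auto

lemma quot_carrier[simp]: "lcarrier (lie_quot L I) = lcoset L I ` lcarrier L"
  by (simp add: lie_quot_def)

lemma quot_zero: "lzero (lie_quot L I) = lcoset L I (lzero L)"
  by (simp add: lie_quot_def)

lemma mem_lcoset: "x \<in> lcarrier L \<Longrightarrow> x \<in> lcoset L I x"
  unfolding lcoset_def
  by (rule image_eqI[of _ _ "lzero L"]) (simp_all add: subspaceD(2)[OF subspace_ideal])

lemma lcoset_eq_iff:
  assumes x: "x \<in> lcarrier L" and y: "y \<in> lcarrier L"
  shows "lcoset L I x = lcoset L I y \<longleftrightarrow> lsub L x y \<in> I"
proof
  assume "lcoset L I x = lcoset L I y"
  then have "y \<in> lcoset L I x" using mem_lcoset[OF y] by simp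
  then obtain i where i: "i \<in> I" "y = ladd L x i" unfolding lcoset_def by auto
  have "i \<in> lcarrier L" using i ideal_subset by auto
  then have "lsub L x y = lneg L i" using i x by (simp add: lsub_def smult_add)
  then show "lsub L x y \<in> I" using ideal_smult i by simp
next
  define j where "j = lsub L x y"
  assume "lsub L x y \<in> I"
  then have j: "j \<in> I" "j \<in> lcarrier L" and x_eq: "x = ladd L y j"
    using x y add_sub_cancel[OF x y] unfolding j_def by auto
  show "lcoset L I x = lcoset L I y"
  proof
    show "lcoset L I x \<subseteq> lcoset L I y"
    proof
      fix z assume "z \<in> lcoset L I x"
      then obtain i where i: "i \<in> I" "z = ladd L x i" unfolding lcoset_def by auto
      have "i \<in> lcarrier L" using i ideal_subset by auto
      then have "z = ladd L y (ladd L j i)" unfolding i(2) x_eq by (rule add_assoc[OF y j(2)])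
      then show "z \<in> lcoset L I y" unfolding lcoset_def using ideal_add[OF j(1) i(1)] by auto
    qed
  next
    show "lcoset L I y \<subseteq> lcoset L I x"
    proof
      fix z assume "z \<in> lcoset L I y"
      then obtain i where i: "i \<in> I" "z = ladd L y i" unfolding lcoset_def by auto
      have iC: "i \<in> lcarrier L" using i ideal_subset by auto
      have "ladd L x (ladd L (lneg L j) i) = ladd L y (ladd L j (ladd L (lneg L j) i))"
        unfolding x_eq using add_assoc[OF y j(2)] iC j(2) by simp
      also have "\<dots> = ladd L y i" using j(2) iC by simp
      finally have "z = ladd L x (ladd L (lneg L j) i)" using i by simp
      then show "z \<in> lcoset L I x"
        unfolding lcoset_def using ideal_add[OF ideal_smult[OF j(1)] i(1)] by auto
    qed
  qed
qed

lemma lcoset_eq_zero_iff: "x \<in> lcarrier L \<Longrightarrow> lcoset L I x = lzero (lie_quot L I) \<longleftrightarrow> x \<in> I"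
  using lcoset_eq_iff[of x "lzero L"] unfolding quot_zero lsub_def by simp

lemma lrep_lcoset_mem: "x \<in> lcarrier L \<Longrightarrow> lrep (lcoset L I x) \<in> lcoset L I x"
  unfolding lrep_def using mem_lcoset by (rule someI)

lemma lrep_lcoset_closed: "x \<in> lcarrier L \<Longrightarrow> lrep (lcoset L I x) \<in> lcarrier L"
  using lrep_lcoset_mem[of x] ideal_subset unfolding lcoset_def by auto

lemma sub_lrep_lcoset: "x \<in> lcarrier L \<Longrightarrow> lsub L (lrep (lcoset L I x)) x \<in> I"
proof -
  assume x: "x \<in> lcarrier L"
  obtain i where i: "i \<in> I" "lrep (lcoset L I x) = ladd L x i"
    using lrep_lcoset_mem[OF x] unfolding lcoset_def by auto
  have iC: "i \<in> lcarrier L" using i ideal_subset by auto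
  have "lsub L (ladd L x i) x = ladd L (lneg L x) (ladd L x i)"
    unfolding lsub_def using x iC add_comm by simp
  also have "\<dots> = i" using x iC by simp
  finally show ?thesis using i by simp
qed

lemma lcoset_lrep: "x \<in> lcarrier L \<Longrightarrow> lcoset L I (lrep (lcoset L I x)) = lcoset L I x"
  using lcoset_eq_iff[OF lrep_lcoset_closed] sub_lrep_lcoset by auto

lemma lrep_closed: "A \<in> lcarrier (lie_quot L I) \<Longrightarrow> lrep A \<in> lcarrier L"
  using lrep_lcoset_closed by auto

lemma lcoset_lrep_quot: "A \<in> lcarrier (lie_quot L I) \<Longrightarrow> lcoset L I (lrep A) = A"
  using lcoset_lrep by auto

lemma quot_add[simp]:
  assumes "x \<in> lcarrier L" "y \<in> lcarrier L"
  shows "ladd (lie_quot L I) (lcoset L I x) (lcoset L I y) = lcoset L I (ladd L x y)"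
proof -
  have "ladd (lie_quot L I) (lcoset L I x) (lcoset L I y) =
      lcoset L I (ladd L (lrep (lcoset L I x)) (lrep (lcoset L I y)))"
    by (simp add: lie_quot_def)
  also have "\<dots> = lcoset L I (ladd L x y)"
    using assms lcoset_eq_iff sub_add_add lrep_lcoset_closed sub_lrep_lcoset ideal_add by simp
  finally show ?thesis .
qed

lemma quot_smult[simp]:
  assumes "x \<in> lcarrier L"
  shows "lsmult (lie_quot L I) c (lcoset L I x) = lcoset L I (lsmult L c x)"
proof -
  have "lsmult (lie_quot L I) c (lcoset L I x) = lcoset L I (lsmult L c (lrep (lcoset L I x)))"
    by (simp add: lie_quot_def)
  also have "\<dots> = lcoset L I (lsmult L c x)"
    using assms lcoset_eq_iff sub_smult_smult lrep_lcoset_closed sub_lrep_lcoset ideal_smult by simp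
  finally show ?thesis .
qed

lemma quot_br[simp]:
  assumes "x \<in> lcarrier L" "y \<in> lcarrier L"
  shows "lbr (lie_quot L I) (lcoset L I x) (lcoset L I y) = lcoset L I (lbr L x y)"
proof -
  have "lbr (lie_quot L I) (lcoset L I x) (lcoset L I y) =
      lcoset L I (lbr L (lrep (lcoset L I x)) (lrep (lcoset L I y)))"
    by (simp add: lie_quot_def)
  also have "\<dots> = lcoset L I (lbr L x y)"
    using assms lcoset_eq_iff sub_br_br lrep_lcoset_closed sub_lrep_lcoset ideal_add
      ideal_br_left ideal_br_right by simp
  finally show ?thesis .
qed

lemma lcoset_closed[simp]: "x \<in> lcarrier L \<Longrightarrow> lcoset L I x \<in> lcarrier (lie_quot L I)"
  by simp

lemma nonassoc_algebra_quot: "nonassoc_algebra (lie_quot L I)"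
  by unfold_locales
    (auto simp: quot_zero add_ac smult_add add_smult br_add_left br_add_right
      br_smult_left br_smult_right)

lemma is_hom_lcoset: "is_hom L (lie_quot L I) (lcoset L I)"
  unfolding is_hom_def is_lin_def by auto

lemma lie_algebra_quot: "lie_algebra L \<Longrightarrow> lie_algebra (lie_quot L I)"
proof -
  assume "lie_algebra L"
  then interpret lie_algebra L .
  interpret Q: nonassoc_algebra "lie_quot L I" by (rule nonassoc_algebra_quot)
  show ?thesis
  proof unfold_locales
    fix x assume "x \<in> lcarrier (lie_quot L I)"
    then show "lbr (lie_quot L I) x x = lzero (lie_quot L I)" by (auto simp: quot_zero)
  next
    fix x y z
    assume "x \<in> lcarrier (lie_quot L I)" "y \<in> lcarrier (lie_quot L I)" "z \<in> lcarrier (lie_quot L I)"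
    then show "ladd (lie_quot L I)
        (ladd (lie_quot L I) (lbr (lie_quot L I) x (lbr (lie_quot L I) y z))
          (lbr (lie_quot L I) y (lbr (lie_quot L I) z x)))
        (lbr (lie_quot L I) z (lbr (lie_quot L I) x y)) = lzero (lie_quot L I)"
      using jacobi by (auto simp: quot_zero)
  qed
qed

lemma
  assumes L': "nonassoc_algebra L'" and h: "is_hom L L' h"
    and vanish: "\<And>x. x \<in> I \<Longrightarrow> h x = lzero L'"
  shows is_hom_factor: "is_hom (lie_quot L I) L' (\<lambda>A. h (lrep A))"
    and factor_lcoset: "\<And>x. x \<in> lcarrier L \<Longrightarrow> h (lrep (lcoset L I x)) = h x"
proof -
  interpret B: nonassoc_algebra L' by fact
  show hx: "h (lrep (lcoset L I x)) = h x" if x: "x \<in> lcarrier L" for x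
  proof -
    have "lsub L' (h (lrep (lcoset L I x))) (h x) = lzero L'"
      using is_lin_sub[OF nonassoc_algebra_axioms is_homD(5)[OF h] lrep_lcoset_closed[OF x] x]
        vanish sub_lrep_lcoset x by simp
    then show ?thesis
      using B.sub_eq_zero_iff is_homD(1)[OF h] lrep_lcoset_closed x by auto
  qed
  show "is_hom (lie_quot L I) L' (\<lambda>A. h (lrep A))"
    unfolding is_hom_def is_lin_def using hx is_homD[OF h] by auto
qed

end

section \<open>Finite-dimensional algebras are Hopfian\<close>

text \<open>An algebra viewed as a module over \<open>class_ring\<close> (the field \<open>'k\<close> as a ring record),
  to use the linear algebra of \<open>VectorSpace\<close>; the multiplicative fields are dummies.\<close>

definition module_of :: "('k::field, 'a) alg \<Rightarrow> ('k, 'a) module" where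
  "module_of L = \<lparr>carrier = lcarrier L, monoid.mult = (\<lambda>x y. x), one = lzero L,
     ring.zero = lzero L, ring.add = ladd L, module.smult = lsmult L\<rparr>"

lemma module_of_simps[simp]:
  "carrier (module_of L) = lcarrier L" "ring.zero (module_of L) = lzero L"
  "ring.add (module_of L) = ladd L" "module.smult (module_of L) = lsmult L"
  by (simp_all add: module_of_def)

context nonassoc_algebra
begin

lemma vectorspace_module_of: "vectorspace (class_ring :: 'k ring) (module_of L)"
proof -
  have neg: "\<forall>v\<in>lcarrier L. \<exists>w\<in>lcarrier L. ladd L v w = lzero L"
    using add_neg smult_closed by blast
  have "module (class_ring :: 'k ring) (module_of L)"
  proof (rule module_criteria)
    show "cring (class_ring :: 'k ring)" by (rule class_cring.cring_axioms)
  qed (use neg in \<open>auto simp: add_ac smult_add add_smult\<close>)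
  then show ?thesis unfolding vectorspace_def using class_field by auto
qed

lemma subspace_of_iff_submodule:
  "subspace_of L W \<longleftrightarrow> submodule (class_ring :: 'k ring) W (module_of L)"
  using vectorspace_module_of unfolding submodule_def subspace_of_def vectorspace_def by auto

lemma inj_on_is_lin_if_basis_to_basis:
  assumes f: "is_lin L L f" and B: "finite B" "vectorspace.basis class_ring (module_of L) B"
    and fB: "vectorspace.basis class_ring (module_of L) (f ` B)" and injB: "inj_on f B"
  shows "inj_on f (lcarrier L)"
proof -
  let ?V = "module_of L"
  let ?K = "class_ring :: 'k ring"
  interpret V: vectorspace ?K ?V by (rule vectorspace_module_of)
  interpret H: mod_hom ?K ?V ?V f
    by unfold_locales (use is_linD[OF f] in \<open>auto simp: module_hom_def\<close>)
  have BC: "B \<subseteq> lcarrier L" and genB: "V.gen_set B" using B(2) unfolding V.basis_def by auto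
  have fBC: "f ` B \<subseteq> lcarrier L" and li: "V.lin_indpt (f ` B)"
    using fB unfolding V.basis_def by auto
  have ker: "x = lzero L" if x: "x \<in> lcarrier L" and fx: "f x = lzero L" for x
  proof -
    obtain a where a: "a \<in> B \<rightarrow> carrier ?K" "V.lincomb a B = x"
      using V.finite_in_span[of B x] B(1) BC x genB by auto
    let ?b = "\<lambda>w. a (the_inv_into B f w)"
    have "f x = finsum ?V (\<lambda>v. f (a v \<odot>\<^bsub>?V\<^esub> v)) B"
      unfolding a(2)[symmetric] V.lincomb_def by (rule H.hom_sum) (use BC in auto)
    also have "\<dots> = finsum ?V (\<lambda>v. ?b (f v) \<odot>\<^bsub>?V\<^esub> f v) B"
      by (rule V.finsum_cong')
        (use BC injB is_linD[OF f] in \<open>auto simp: the_inv_into_f_f subset_iff\<close>)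
    also have "\<dots> = V.lincomb ?b (f ` B)"
      unfolding V.lincomb_def by (rule V.add.finprod_reindex[symmetric]) (use fBC injB in auto)
    finally have lc0: "V.lincomb ?b (f ` B) = lzero L" using fx by simp
    have "\<forall>w\<in>f ` B. ?b w = 0"
    proof (rule ccontr)
      assume "\<not> (\<forall>w\<in>f ` B. ?b w = 0)"
      then obtain w where "w \<in> f ` B" "?b w \<noteq> 0" by auto
      then have "V.lin_dep (f ` B)" unfolding V.lin_dep_def using B(1) lc0
        by (intro exI[of _ "f ` B"] exI[of _ ?b] exI[of _ w]) auto
      then show False using li by simp
    qed
    then have a0: "\<forall>v\<in>B. a v = 0" using injB the_inv_into_f_f by fastforce
    have "x = finsum ?V (\<lambda>v. a v \<odot>\<^bsub>?V\<^esub> v) B" using a unfolding V.lincomb_def by simp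
    also have "\<dots> = finsum ?V (\<lambda>v. \<zero>\<^bsub>?V\<^esub>) B"
      by (rule V.finsum_cong') (use BC a0 in auto)
    finally show "x = lzero L" by simp
  qed
  show ?thesis
    by (rule is_lin_inj_on_if_kernel_trivial[OF nonassoc_algebra_axioms nonassoc_algebra_axioms f ker])
qed

text \<open>A surjective linear endomorphism of a finite-dimensional space maps a basis onto a
  generating set of the same size, hence onto a basis, and is therefore injective.\<close>

lemma is_lin_surj_imp_inj:
  assumes A: "finite A" "A \<subseteq> lcarrier L"
    and span: "\<And>W. subspace_of L W \<Longrightarrow> A \<subseteq> W \<Longrightarrow> lcarrier L \<subseteq> W"
    and f: "is_lin L L f" and surj: "f ` lcarrier L = lcarrier L"
  shows "inj_on f (lcarrier L)"
proof -
  let ?V = "module_of L"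
  let ?K = "class_ring :: 'k ring"
  interpret V: vectorspace ?K ?V by (rule vectorspace_module_of)
  have span_closed: "\<And>S. S \<subseteq> lcarrier L \<Longrightarrow> V.span S \<subseteq> lcarrier L"
    using V.span_closed by auto
  have subspace_span: "\<And>S. S \<subseteq> lcarrier L \<Longrightarrow> subspace_of L (V.span S)"
    using V.span_is_submodule subspace_of_iff_submodule by simp
  have "lcarrier L \<subseteq> V.span A" using span[OF subspace_span[OF A(2)]] V.in_own_span A(2) by simp
  then have "V.fin_dim" unfolding V.fin_dim_def using A span_closed[OF A(2)] by auto
  then obtain B where B: "finite B" "V.basis B" using V.finite_basis_exists by auto
  have BC: "B \<subseteq> lcarrier L" and genB: "V.gen_set B" using B(2) unfolding V.basis_def by auto
  have fBC: "f ` B \<subseteq> lcarrier L" using BC is_linD(1)[OF f] by auto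
  have preim: "subspace_of L {x \<in> lcarrier L. f x \<in> V.span (f ` B)}"
    by (rule subspace_vimage[OF nonassoc_algebra_axioms nonassoc_algebra_axioms f
          subspace_span[OF fBC]])
  have "B \<subseteq> {x \<in> lcarrier L. f x \<in> V.span (f ` B)}" using BC V.in_own_span fBC by auto
  then have "V.span B \<subseteq> {x \<in> lcarrier L. f x \<in> V.span (f ` B)}"
    using V.span_is_subset preim subspace_of_iff_submodule by blast
  then have preimage_all: "lcarrier L \<subseteq> {x \<in> lcarrier L. f x \<in> V.span (f ` B)}" using genB by simp
  have "lcarrier L \<subseteq> V.span (f ` B)"
  proof
    fix x assume "x \<in> lcarrier L"
    then obtain y where "y \<in> lcarrier L" "x = f y" using surj by (metis imageE)
    then show "x \<in> V.span (f ` B)" using preimage_all by blast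
  qed
  then have genfB: "V.gen_set (f ` B)" using span_closed[OF fBC] by auto
  have "card (f ` B) \<ge> V.dim" using V.gen_ge_dim[of "f ` B"] fBC genfB B(1) by simp
  moreover have "card (f ` B) \<le> card B" using card_image_le[OF B(1)] .
  ultimately have card_eq: "card (f ` B) = card B" using V.dim_basis B by simp
  have "V.basis (f ` B)"
    using V.dim_gen_is_basis[of "f ` B"] fBC genfB B card_eq V.dim_basis by simp
  then show ?thesis
    using inj_on_is_lin_if_basis_to_basis[OF f B(1,2)] eq_card_imp_inj_on[OF B(1) card_eq] by blast
qed

end

section \<open>Surjectivity modulo the derived algebra\<close>

definition sum_set :: "('k::field, 'a) alg \<Rightarrow> 'a set \<Rightarrow> 'a set \<Rightarrow> 'a set" where
  "sum_set L A B = {ladd L a b | a b. a \<in> A \<and> b \<in> B}"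

context lie_algebra
begin

lemma subspace_sum_set:
  assumes A: "subspace_of L A" and B: "subspace_of L B"
  shows "subspace_of L (sum_set L A B)"
  unfolding subspace_of_def
proof (intro conjI ballI allI)
  have AC: "A \<subseteq> lcarrier L" and BC: "B \<subseteq> lcarrier L" using A B subspaceD by auto
  show "sum_set L A B \<subseteq> lcarrier L" unfolding sum_set_def using AC BC by auto
  show "lzero L \<in> sum_set L A B" unfolding sum_set_def using subspaceD(2)[OF A] subspaceD(2)[OF B]
    by (intro CollectI exI[of _ "lzero L"]) simp
  fix x y assume x: "x \<in> sum_set L A B" and y: "y \<in> sum_set L A B"
  obtain a b where ab: "a \<in> A" "b \<in> B" "x = ladd L a b" using x unfolding sum_set_def by auto
  obtain a' b' where ab': "a' \<in> A" "b' \<in> B" "y = ladd L a' b'" using y unfolding sum_set_def by auto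
  have "ladd L x y = ladd L (ladd L a a') (ladd L b b')"
    using ab ab' AC BC by (simp add: add_ac subset_iff)
  then show "ladd L x y \<in> sum_set L A B" unfolding sum_set_def
    using subspaceD(3)[OF A ab(1) ab'(1)] subspaceD(3)[OF B ab(2) ab'(2)] by blast
next
  have AC: "A \<subseteq> lcarrier L" and BC: "B \<subseteq> lcarrier L" using A B subspaceD by auto
  fix c x assume x: "x \<in> sum_set L A B"
  obtain a b where ab: "a \<in> A" "b \<in> B" "x = ladd L a b" using x unfolding sum_set_def by auto
  have "lsmult L c x = ladd L (lsmult L c a) (lsmult L c b)"
    using ab AC BC by (simp add: smult_add subset_iff)
  then show "lsmult L c x \<in> sum_set L A B" unfolding sum_set_def
    using subspaceD(4)[OF A ab(1)] subspaceD(4)[OF B ab(2)] by blast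
qed

text \<open>In the induction step, bracket decompositions of \<open>a\<close> and \<open>y\<close>: all cross terms lie one step
  deeper in the lower central series.\<close>

lemma lcs_surj_mod_lcs_Suc:
  assumes h: "is_hom L L \<Phi>"
    and base: "\<And>x. x \<in> lcarrier L \<Longrightarrow> \<exists>y\<in>lcarrier L. \<exists>u\<in>lcs L 2. x = ladd L (\<Phi> y) u"
  shows "w \<in> lcs L (Suc k) \<Longrightarrow> \<exists>w'\<in>lcs L (Suc k). \<exists>w2\<in>lcs L (Suc (Suc k)). w = ladd L (\<Phi> w') w2"
proof (induction k arbitrary: w)
  case 0
  then show ?case using base by (simp add: numeral_2_eq_2)
next
  case (Suc k)
  have hC: "\<And>x. x \<in> lcarrier L \<Longrightarrow> \<Phi> x \<in> lcarrier L" using is_homD(1)[OF h] .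
  let ?V = "sum_set L (\<Phi> ` lcs L (Suc (Suc k))) (lcs L (Suc (Suc (Suc k))))"
  have V: "subspace_of L ?V"
    by (rule subspace_sum_set[OF subspace_image[OF nonassoc_algebra_axioms nonassoc_algebra_axioms
          is_homD(5)[OF h] subspace_lcs] subspace_lcs])
  have "lcs L (Suc (Suc k)) \<subseteq> ?V"
  proof (rule lcs_Suc_Suc_least[OF V])
    fix a y assume a: "a \<in> lcarrier L" and y: "y \<in> lcs L (Suc k)"
    obtain a' u where au: "a' \<in> lcarrier L" "u \<in> lcs L (Suc (Suc 0))" "a = ladd L (\<Phi> a') u"
      using base[OF a] by (auto simp: numeral_2_eq_2)
    obtain y' w where yw: "y' \<in> lcs L (Suc k)" "w \<in> lcs L (Suc (Suc k))" "y = ladd L (\<Phi> y') w"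
      using Suc.IH[OF y] by blast
    have C: "u \<in> lcarrier L" "y' \<in> lcarrier L" "w \<in> lcarrier L"
      "\<Phi> a' \<in> lcarrier L" "\<Phi> y' \<in> lcarrier L"
      using au yw lcs_subset_carrier hC by auto
    have split: "lbr L a y = ladd L (lbr L (\<Phi> a') (\<Phi> y'))
        (ladd L (lbr L (\<Phi> a') w) (ladd L (lbr L u (\<Phi> y')) (lbr L u w)))"
      unfolding au(3) yw(3) using C by (simp add: br_add_left br_add_right add_assoc add_left_comm)
    have "lbr L (\<Phi> a') (\<Phi> y') \<in> \<Phi> ` lcs L (Suc (Suc k))"
      using is_homD(4)[OF h au(1) C(2)] lcs_br[OF au(1) yw(1)] by (metis image_eqI)
    moreover have "lbr L (\<Phi> a') w \<in> lcs L (Suc (Suc (Suc k)))" using lcs_br[OF C(4) yw(2)] .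
    moreover have "\<Phi> y' \<in> lcs L (Suc k)" using is_hom_image_lcs[OF nonassoc_algebra_axioms
        nonassoc_algebra_axioms h] yw(1) by blast
    then have "lbr L u (\<Phi> y') \<in> lcs L (Suc (Suc (Suc k)))" using lcs_br_lcs[OF au(2)] by simp
    moreover have "lbr L u w \<in> lcs L (Suc (Suc (Suc k)))" using lcs_br[OF C(1) yw(2)] .
    ultimately show "lbr L a y \<in> ?V"
      unfolding sum_set_def split using subspaceD(3)[OF subspace_lcs] by blast
  qed
  then show ?case using Suc.prems unfolding sum_set_def by blast
qed

lemma surj_mod_lcs:
  assumes h: "is_hom L L \<Phi>"
    and base: "\<And>x. x \<in> lcarrier L \<Longrightarrow> \<exists>y\<in>lcarrier L. \<exists>u\<in>lcs L 2. x = ladd L (\<Phi> y) u"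
  shows "x \<in> lcarrier L \<Longrightarrow> \<exists>y\<in>lcarrier L. \<exists>w\<in>lcs L (Suc j). x = ladd L (\<Phi> y) w"
proof (induction j)
  case 0
  have "\<Phi> (lzero L) = lzero L"
    by (rule is_lin_zero[OF nonassoc_algebra_axioms nonassoc_algebra_axioms is_homD(5)[OF h]])
  then show ?case using 0 by (intro bexI[of _ "lzero L"] bexI[of _ x]) simp_all
next
  case (Suc j)
  obtain y w where yw: "y \<in> lcarrier L" "w \<in> lcs L (Suc j)" "x = ladd L (\<Phi> y) w"
    using Suc.IH[OF Suc.prems] by blast
  obtain w' w2 where ww: "w' \<in> lcs L (Suc j)" "w2 \<in> lcs L (Suc (Suc j))" "w = ladd L (\<Phi> w') w2"
    using lcs_surj_mod_lcs_Suc[OF h base yw(2)] by blast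
  have C: "w' \<in> lcarrier L" "w2 \<in> lcarrier L" using ww lcs_subset_carrier by auto
  have "x = ladd L (\<Phi> (ladd L y w')) w2"
    unfolding yw(3) ww(3) using yw(1) C is_homD(1)[OF h] is_homD(2)[OF h yw(1) C(1)]
    by (simp add: add_assoc)
  then show ?case using yw(1) C ww(2) by blast
qed

lemma nilpotent_hom_surj:
  assumes nil: "lcs L (Suc t) = {lzero L}" and h: "is_hom L L \<Phi>"
    and base: "\<And>x. x \<in> lcarrier L \<Longrightarrow> \<exists>y\<in>lcarrier L. \<exists>u\<in>lcs L 2. x = ladd L (\<Phi> y) u"
  shows "\<Phi> ` lcarrier L = lcarrier L"
proof
  show "\<Phi> ` lcarrier L \<subseteq> lcarrier L" using is_homD(1)[OF h] by auto
  show "lcarrier L \<subseteq> \<Phi> ` lcarrier L"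
  proof
    fix x assume "x \<in> lcarrier L"
    then obtain y where "y \<in> lcarrier L" "x = \<Phi> y"
      using surj_mod_lcs[OF h base, of x t] nil is_homD(1)[OF h] by auto
    then show "x \<in> \<Phi> ` lcarrier L" by blast
  qed
qed

end

lemma BijGroup_simps:
  "carrier (BijGroup S) = Bij S"
  "f \<in> Bij S \<Longrightarrow> g \<in> Bij S \<Longrightarrow> f \<otimes>\<^bsub>BijGroup S\<^esub> g = compose S f g"
  "\<one>\<^bsub>BijGroup S\<^esub> = (\<lambda>x\<in>S. x)"
  by (simp_all add: BijGroup_def)

context nonassoc_algebra
begin

lemma lie_autsD:
  assumes "f \<in> lie_auts L"
  shows "f \<in> Bij (lcarrier L)" "bij_betw f (lcarrier L) (lcarrier L)" "f \<in> extensional (lcarrier L)"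
    "is_hom L L f"
  using assms unfolding lie_auts_def Bij_def is_hom_def is_lin_def bij_betw_def by auto

lemma lie_autsI:
  assumes "f \<in> extensional (lcarrier L)" "bij_betw f (lcarrier L) (lcarrier L)" "is_hom L L f"
  shows "f \<in> lie_auts L"
  using assms unfolding lie_auts_def Bij_def is_hom_def is_lin_def by auto

lemma id_lie_auts: "(\<lambda>x\<in>lcarrier L. x) \<in> lie_auts L"
  by (rule lie_autsI) (auto simp: is_hom_def is_lin_def bij_betw_def inj_on_def)

lemma compose_lie_auts:
  assumes f: "f \<in> lie_auts L" and g: "g \<in> lie_auts L"
  shows "compose (lcarrier L) f g \<in> lie_auts L"
proof (rule lie_autsI)
  show "compose (lcarrier L) f g \<in> extensional (lcarrier L)" by (simp add: compose_def)
  have "bij_betw (f \<circ> g) (lcarrier L) (lcarrier L)"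
    using bij_betw_trans lie_autsD(2)[OF f] lie_autsD(2)[OF g] by blast
  then show "bij_betw (compose (lcarrier L) f g) (lcarrier L) (lcarrier L)"
    by (rule bij_betw_cong[THEN iffD1, rotated]) (simp add: compose_def)
  show "is_hom L L (compose (lcarrier L) f g)"
    by (rule is_hom_cong[OF nonassoc_algebra_axioms
          is_hom_comp[OF lie_autsD(4)[OF g] lie_autsD(4)[OF f]]])
      (simp add: compose_def)
qed

lemma inv_lie_auts:
  assumes f: "f \<in> lie_auts L"
  shows "(\<lambda>x\<in>lcarrier L. inv_into (lcarrier L) f x) \<in> lie_auts L"
proof (rule lie_autsI)
  have b: "bij_betw f (lcarrier L) (lcarrier L)" and h: "is_hom L L f" using lie_autsD[OF f] by auto
  let ?g = "inv_into (lcarrier L) f"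
  have gC: "\<And>x. x \<in> lcarrier L \<Longrightarrow> ?g x \<in> lcarrier L"
    using b by (simp add: bij_betw_def inv_into_into)
  have fg: "\<And>x. x \<in> lcarrier L \<Longrightarrow> f (?g x) = x" using b by (simp add: bij_betw_def f_inv_into_f)
  have gf: "\<And>x. x \<in> lcarrier L \<Longrightarrow> ?g (f x) = x" using b by (simp add: bij_betw_def inv_into_f_f)
  show "(\<lambda>x\<in>lcarrier L. ?g x) \<in> extensional (lcarrier L)" by simp
  show "bij_betw (\<lambda>x\<in>lcarrier L. ?g x) (lcarrier L) (lcarrier L)"
    using restrict_inv_into_Bij[OF lie_autsD(1)[OF f]] unfolding Bij_def by simp
  show "is_hom L L (\<lambda>x\<in>lcarrier L. ?g x)"
    unfolding is_hom_def is_lin_def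
  proof (intro conjI ballI allI)
    fix x assume x: "x \<in> lcarrier L"
    show "(\<lambda>x\<in>lcarrier L. ?g x) x \<in> lcarrier L" using gC x by simp
    fix y assume y: "y \<in> lcarrier L"
    have "?g (ladd L x y) = ?g (f (ladd L (?g x) (?g y)))"
      using is_homD(2)[OF h gC[OF x] gC[OF y]] fg x y by simp
    then show "(\<lambda>x\<in>lcarrier L. ?g x) (ladd L x y) =
        ladd L ((\<lambda>x\<in>lcarrier L. ?g x) x) ((\<lambda>x\<in>lcarrier L. ?g x) y)"
      using gf gC x y by simp
    have "?g (lbr L x y) = ?g (f (lbr L (?g x) (?g y)))"
      using is_homD(4)[OF h gC[OF x] gC[OF y]] fg x y by simp
    then show "(\<lambda>x\<in>lcarrier L. ?g x) (lbr L x y) =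
        lbr L ((\<lambda>x\<in>lcarrier L. ?g x) x) ((\<lambda>x\<in>lcarrier L. ?g x) y)"
      using gf gC x y by simp
  next
    fix c x assume x: "x \<in> lcarrier L"
    have "?g (lsmult L c x) = ?g (f (lsmult L c (?g x)))"
      using is_homD(3)[OF h gC[OF x]] fg x by simp
    then show "(\<lambda>x\<in>lcarrier L. ?g x) (lsmult L c x) = lsmult L c ((\<lambda>x\<in>lcarrier L. ?g x) x)"
      using gf gC x by simp
  qed
qed

lemma subgroup_BijGroup_lie_auts:
  assumes sub: "H \<subseteq> lie_auts L" and one: "(\<lambda>x\<in>lcarrier L. x) \<in> H"
    and comp: "\<And>f g. f \<in> H \<Longrightarrow> g \<in> H \<Longrightarrow> compose (lcarrier L) f g \<in> H"
    and inv: "\<And>f. f \<in> H \<Longrightarrow> (\<lambda>x\<in>lcarrier L. inv_into (lcarrier L) f x) \<in> H"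
  shows "subgroup H (BijGroup (lcarrier L))"
proof (rule group.subgroupI[OF group_BijGroup])
  have HB: "H \<subseteq> Bij (lcarrier L)" using sub lie_autsD(1) by blast
  then show "H \<subseteq> carrier (BijGroup (lcarrier L))" by (simp add: BijGroup_simps)
  show "H \<noteq> {}" using one by auto
  fix a assume a: "a \<in> H"
  then show "inv\<^bsub>BijGroup (lcarrier L)\<^esub> a \<in> H" using inv[OF a] HB by (subst inv_BijGroup) auto
  fix b assume b: "b \<in> H"
  then show "a \<otimes>\<^bsub>BijGroup (lcarrier L)\<^esub> b \<in> H"
    using comp[OF a b] a HB by (simp add: BijGroup_simps subset_iff)
qed

lemma group_Aut: "group (Aut L)"
proof -
  have "subgroup (lie_auts L) (BijGroup (lcarrier L))"
    by (rule subgroup_BijGroup_lie_auts) (auto simp: id_lie_auts compose_lie_auts inv_lie_auts)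
  then show ?thesis unfolding Aut_def by (rule subgroup.subgroup_is_group[OF _ group_BijGroup])
qed

end

section \<open>The free magma algebra\<close>

definition supp :: "(tree \<Rightarrow> 'k::zero) \<Rightarrow> tree set" where
  "supp f = {s. f s \<noteq> 0}"

definition tree_monomial :: "tree \<Rightarrow> tree \<Rightarrow> 'k::{zero,one}" where
  "tree_monomial s = (\<lambda>r. if r = s then 1 else 0)"

lemma free_magma_alg_carrier: "f \<in> lcarrier (free_magma_alg d) \<longleftrightarrow>
   finite (supp f) \<and> (\<forall>s. f s \<noteq> 0 \<longrightarrow> leaves s \<subseteq> {..<d})"
  by (simp add: free_magma_alg_def supp_def)

lemma free_magma_alg_simps:
  "lzero (free_magma_alg d) = (\<lambda>_. 0)"
  "ladd (free_magma_alg d) = (\<lambda>f g s. f s + g s)"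
  "lsmult (free_magma_alg d) = (\<lambda>c f s. c * f s)"
  "lbr (free_magma_alg d) =
     (\<lambda>f g s. case s of Leaf _ \<Rightarrow> 0 | Node a b \<Rightarrow> f a * g b)"
  by (simp_all add: free_magma_alg_def)

lemma supp_add: "supp (\<lambda>s. f s + g s) \<subseteq> supp f \<union> supp (g :: tree \<Rightarrow> 'k::field)"
  unfolding supp_def by auto

lemma supp_smult: "supp (\<lambda>s. c * f s) \<subseteq> supp (f :: tree \<Rightarrow> 'k::field)"
  unfolding supp_def by auto

lemma supp_br: "supp (\<lambda>s. case s of Leaf _ \<Rightarrow> 0 | Node a b \<Rightarrow> f a * (g b :: 'k::field)) \<subseteq>
   (\<lambda>(a, b). Node a b) ` (supp f \<times> supp g)"
proof
  fix s assume "s \<in> supp (\<lambda>s. case s of Leaf _ \<Rightarrow> 0 | Node a b \<Rightarrow> f a * g b)"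
  then show "s \<in> (\<lambda>(a, b). Node a b) ` (supp f \<times> supp g)"
    unfolding supp_def by (cases s) (auto intro!: image_eqI[of _ _ "(a,b)" for a b])
qed

lemma nonassoc_algebra_free_magma: "nonassoc_algebra (free_magma_alg d :: ('k::field, tree \<Rightarrow> 'k) alg)"
proof unfold_locales
  fix x y :: "tree \<Rightarrow> 'k"
  let ?M = "free_magma_alg d :: ('k::field, tree \<Rightarrow> 'k) alg"
  assume x: "x \<in> lcarrier ?M" and y: "y \<in> lcarrier ?M"
  show "ladd ?M x y \<in> lcarrier ?M"
  proof -
    have "finite (supp (ladd ?M x y))"
      using x y supp_add[of x y] unfolding free_magma_alg_carrier free_magma_alg_simps
        by (auto intro: finite_subset)
    moreover have "\<forall>s. ladd ?M x y s \<noteq> 0 \<longrightarrow> leaves s \<subseteq> {..<d}"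
    proof (intro allI impI)
      fix s assume "ladd ?M x y s \<noteq> 0"
      then have "x s \<noteq> 0 \<or> y s \<noteq> 0" unfolding free_magma_alg_simps by auto
      then show "leaves s \<subseteq> {..<d}" using x y unfolding free_magma_alg_carrier by blast
    qed
    ultimately show ?thesis unfolding free_magma_alg_carrier by simp
  qed
  show "lbr ?M x y \<in> lcarrier ?M"
  proof -
    have "finite (supp (lbr ?M x y))"
      using x y supp_br[of x y] unfolding free_magma_alg_carrier free_magma_alg_simps
        by (auto intro: finite_subset)
    moreover have "\<forall>s. lbr ?M x y s \<noteq> 0 \<longrightarrow> leaves s \<subseteq> {..<d}"
    proof (intro allI impI)
      fix s assume "lbr ?M x y s \<noteq> 0"
      then show "leaves s \<subseteq> {..<d}" using x y unfolding free_magma_alg_carrier free_magma_alg_simps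
        by (cases s) auto
    qed
    ultimately show ?thesis unfolding free_magma_alg_carrier by simp
  qed
next
  fix x :: "tree \<Rightarrow> 'k" and c
  let ?M = "free_magma_alg d :: ('k::field, tree \<Rightarrow> 'k) alg"
  assume x: "x \<in> lcarrier ?M"
  show "lsmult ?M c x \<in> lcarrier ?M"
    using x supp_smult[of c x] unfolding free_magma_alg_carrier free_magma_alg_simps
      by (auto intro: finite_subset)
next
  show "lzero (free_magma_alg d) \<in> lcarrier (free_magma_alg d)"
    unfolding free_magma_alg_carrier free_magma_alg_simps supp_def by simp
qed (simp_all add: free_magma_alg_simps fun_eq_iff algebra_simps split: tree.split)

lemma tree_monomial_closed:
  "leaves s \<subseteq> {..<d} \<Longrightarrow> tree_monomial s \<in> lcarrier (free_magma_alg d)"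
  unfolding free_magma_alg_carrier tree_monomial_def supp_def by auto

lemma br_tree_monomial:
  "lbr (free_magma_alg d) (tree_monomial a) (tree_monomial b) = tree_monomial (Node a b)"
  unfolding free_magma_alg_simps tree_monomial_def by (auto split: tree.split)

lemma free_magma_spanned_by_monomials:
  fixes W :: "(tree \<Rightarrow> 'k::field) set"
  assumes W: "subspace_of (free_magma_alg d) W"
    and tree_monomial: "\<And>s. leaves s \<subseteq> {..<d} \<Longrightarrow> tree_monomial s \<in> W"
  shows "lcarrier (free_magma_alg d) \<subseteq> W"
proof -
  let ?M = "free_magma_alg d :: ('k::field, tree \<Rightarrow> 'k) alg"
  interpret nonassoc_algebra ?M by (rule nonassoc_algebra_free_magma)
  have main: "finite A \<Longrightarrow> (\<forall>f. f \<in> lcarrier ?M \<longrightarrow> supp f \<subseteq> A \<longrightarrow> f \<in> W)" for A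
  proof (induction A rule: finite_induct)
    case empty
    show ?case
    proof (intro allI impI)
      fix f :: "tree \<Rightarrow> 'k" assume "f \<in> lcarrier ?M" "supp f \<subseteq> {}"
      then have "f = (\<lambda>_. 0)" unfolding supp_def by auto
      then show "f \<in> W" using subspaceD(2)[OF W] unfolding free_magma_alg_simps by simp
    qed
  next
    case (insert a A)
    show ?case
    proof (intro allI impI)
      fix f :: "tree \<Rightarrow> 'k" assume f: "f \<in> lcarrier ?M" "supp f \<subseteq> insert a A"
      let ?g = "f(a := 0)"
      have gC: "?g \<in> lcarrier ?M" using f(1) unfolding free_magma_alg_carrier supp_def
        by (auto intro: finite_subset)
      have "supp ?g \<subseteq> A" using f(2) insert.hyps(2) unfolding supp_def by auto
      then have gW: "?g \<in> W" using insert.IH gC by blast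
      show "f \<in> W"
      proof (cases "f a = 0")
        case True
        then have "f = ?g" by auto
        then show ?thesis using gW by simp
      next
        case False
        then have "leaves a \<subseteq> {..<d}" using f(1) unfolding free_magma_alg_carrier by auto
        then have "lsmult ?M (f a) (tree_monomial a) \<in> W"
          using tree_monomial subspaceD(4)[OF W] by blast
        then have "ladd ?M ?g (lsmult ?M (f a) (tree_monomial a)) \<in> W"
          using gW subspaceD(3)[OF W] by blast
        moreover have "ladd ?M ?g (lsmult ?M (f a) (tree_monomial a)) = f"
          unfolding free_magma_alg_simps tree_monomial_def by auto
        ultimately show ?thesis by simp
      qed
    qed
  qed
  show ?thesis using main free_magma_alg_carrier by blast
qed

lemma free_magma_generated_by_leaves:
  fixes W :: "(tree \<Rightarrow> 'k::field) set"
  assumes W: "subspace_of (free_magma_alg d) W"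
    and brW: "\<And>x y. x \<in> W \<Longrightarrow> y \<in> W \<Longrightarrow> lbr (free_magma_alg d) x y \<in> W"
    and gen: "\<And>i. i < d \<Longrightarrow> tree_monomial (Leaf i) \<in> W"
  shows "lcarrier (free_magma_alg d) \<subseteq> W"
proof (rule free_magma_spanned_by_monomials[OF W])
  fix s show "leaves s \<subseteq> {..<d} \<Longrightarrow> tree_monomial s \<in> W"
  proof (induction s)
    case (Leaf i) then show ?case using gen by simp
  next
    case (Node a b)
    then have "lbr (free_magma_alg d) (tree_monomial a) (tree_monomial b) \<in> W" using brW by simp
    then show ?case unfolding br_tree_monomial .
  qed
qed

primrec subst_tree :: "(nat \<Rightarrow> tree \<Rightarrow> 'k::field) \<Rightarrow> tree \<Rightarrow> tree \<Rightarrow> 'k" where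
  "subst_tree z (Leaf i) = z i"
| "subst_tree z (Node a b) =
    (\<lambda>r. case r of Leaf _ \<Rightarrow> 0 | Node p q \<Rightarrow> subst_tree z a p * subst_tree z b q)"

definition subst :: "(nat \<Rightarrow> tree \<Rightarrow> 'k::field) \<Rightarrow> (tree \<Rightarrow> 'k) \<Rightarrow> tree \<Rightarrow> 'k" where
  "subst z f = (\<lambda>r. \<Sum>s\<in>supp f. f s * subst_tree z s r)"

lemma subst_eq_sum:
  assumes "finite A" "supp f \<subseteq> A"
  shows "subst z f r = (\<Sum>s\<in>A. f s * subst_tree z s r)"
  unfolding subst_def using assms
  by (intro sum.mono_neutral_left) (auto simp: supp_def)

lemma subst_tree_closed:
  assumes z: "\<And>i. i < d \<Longrightarrow> z i \<in> lcarrier (free_magma_alg d :: ('k::field, tree \<Rightarrow> 'k) alg)"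
  shows "leaves s \<subseteq> {..<d} \<Longrightarrow> subst_tree z s \<in> lcarrier (free_magma_alg d)"
proof (induction s)
  case (Leaf i) then show ?case using z by simp
next
  case (Node a b)
  interpret nonassoc_algebra "free_magma_alg d :: ('k::field, tree \<Rightarrow> 'k) alg"
    by (rule nonassoc_algebra_free_magma)
  have "lbr (free_magma_alg d) (subst_tree z a) (subst_tree z b) \<in> lcarrier (free_magma_alg d)"
    using Node by simp
  then show ?case unfolding free_magma_alg_simps by simp
qed

lemma subst_closed:
  assumes z: "\<And>i. i < d \<Longrightarrow> z i \<in> lcarrier (free_magma_alg d)"
    and f: "f \<in> lcarrier (free_magma_alg d)"
  shows "subst z f \<in> lcarrier (free_magma_alg d)"
proof -
  have fin: "finite (supp f)" and lv: "\<And>s. s \<in> supp f \<Longrightarrow> leaves s \<subseteq> {..<d}"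
    using f unfolding free_magma_alg_carrier supp_def by auto
  have ev: "\<And>s. s \<in> supp f \<Longrightarrow> subst_tree z s \<in> lcarrier (free_magma_alg d)"
    using subst_tree_closed[where z=z, OF z] lv by blast
  have sub: "supp (subst z f) \<subseteq> (\<Union>s\<in>supp f. supp (subst_tree z s))"
  proof
    fix r assume "r \<in> supp (subst z f)"
    then have "(\<Sum>s\<in>supp f. f s * subst_tree z s r) \<noteq> 0" unfolding supp_def subst_def by simp
    then obtain s where "s \<in> supp f" "subst_tree z s r \<noteq> 0"
      by (metis (no_types, lifting) mult_zero_right sum.neutral)
    then show "r \<in> (\<Union>s\<in>supp f. supp (subst_tree z s))" unfolding supp_def by auto
  qed
  have "finite (\<Union>s\<in>supp f. supp (subst_tree z s))"
    using fin ev unfolding free_magma_alg_carrier by auto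
  then have "finite (supp (subst z f))" using sub finite_subset by blast
  moreover have "\<forall>r. subst z f r \<noteq> 0 \<longrightarrow> leaves r \<subseteq> {..<d}"
  proof (intro allI impI)
    fix r assume "subst z f r \<noteq> 0"
    then have "r \<in> (\<Union>s\<in>supp f. supp (subst_tree z s))" using sub unfolding supp_def by auto
    then obtain s where "s \<in> supp f" "subst_tree z s r \<noteq> 0" unfolding supp_def by auto
    then show "leaves r \<subseteq> {..<d}" using ev unfolding free_magma_alg_carrier by auto
  qed
  ultimately show ?thesis unfolding free_magma_alg_carrier by simp
qed

lemma subst_smult:
  assumes "finite (supp f)"
  shows "subst z (lsmult (free_magma_alg d) c f) = lsmult (free_magma_alg d) c (subst z f)"
proof
  fix r
  have "subst z (lsmult (free_magma_alg d) c f) r = (\<Sum>s\<in>supp f. (c * f s) * subst_tree z s r)"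
    unfolding free_magma_alg_simps using assms supp_smult[of c f] by (rule subst_eq_sum)
  also have "\<dots> = c * subst z f r" unfolding subst_def by (simp add: sum_distrib_left mult.assoc)
  finally show "subst z (lsmult (free_magma_alg d) c f) r = lsmult (free_magma_alg d) c (subst z f) r"
    unfolding free_magma_alg_simps by simp
qed

lemma subst_add:
  assumes ff: "finite (supp f)" and fg: "finite (supp g)"
  shows "subst z (ladd (free_magma_alg d) f g) = ladd (free_magma_alg d) (subst z f) (subst z g)"
proof
  fix r
  let ?A = "supp f \<union> supp g"
  have "subst z (ladd (free_magma_alg d) f g) r = (\<Sum>s\<in>?A. (f s + g s) * subst_tree z s r)"
    unfolding free_magma_alg_simps using ff fg supp_add[of f g] by (intro subst_eq_sum) auto
  also have "\<dots> = (\<Sum>s\<in>?A. f s * subst_tree z s r) + (\<Sum>s\<in>?A. g s * subst_tree z s r)"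
    by (simp add: distrib_right sum.distrib)
  also have "\<dots> = subst z f r + subst z g r"
    using ff fg subst_eq_sum[of ?A f z r] subst_eq_sum[of ?A g z r] by simp
  finally show "subst z (ladd (free_magma_alg d) f g) r = ladd (free_magma_alg d) (subst z f) (subst z g) r"
    unfolding free_magma_alg_simps by simp
qed

lemma subst_br:
  assumes ff: "finite (supp f)" and fg: "finite (supp g)"
  shows "subst z (lbr (free_magma_alg d) f g) = lbr (free_magma_alg d) (subst z f) (subst z g)"
proof
  fix r
  let ?A = "(\<lambda>(a, b). Node a b) ` (supp f \<times> supp g)"
  have inj: "inj_on (\<lambda>(a, b). Node a b) (supp f \<times> supp g)" by (auto simp: inj_on_def)
  have "subst z (lbr (free_magma_alg d) f g) r = (\<Sum>s\<in>?A. lbr (free_magma_alg d) f g s * subst_tree z s r)"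
    using ff fg supp_br[of f g] unfolding free_magma_alg_simps by (intro subst_eq_sum) auto
  also have "\<dots> = (\<Sum>(a, b)\<in>supp f \<times> supp g. f a * g b * subst_tree z (Node a b) r)"
    by (subst sum.reindex[OF inj]) (simp add: free_magma_alg_simps case_prod_unfold)
  also have "\<dots> = lbr (free_magma_alg d) (subst z f) (subst z g) r"
  proof (cases r)
    case (Leaf i)
    then show ?thesis by (simp add: free_magma_alg_simps case_prod_unfold)
  next
    case (Node p q)
    have "(\<Sum>(a, b)\<in>supp f \<times> supp g. f a * g b * subst_tree z (Node a b) r) =
          (\<Sum>a\<in>supp f. \<Sum>b\<in>supp g. (f a * subst_tree z a p) * (g b * subst_tree z b q))"
      unfolding Node by (simp add: sum.cartesian_product[symmetric] algebra_simps)
    also have "\<dots> = subst z f p * subst z g q"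
      unfolding subst_def by (simp add: sum_product)
    finally show ?thesis unfolding Node free_magma_alg_simps by simp
  qed
  finally show "subst z (lbr (free_magma_alg d) f g) r = lbr (free_magma_alg d) (subst z f) (subst z g) r" .
qed

lemma is_hom_subst:
  assumes z: "\<And>i. i < d \<Longrightarrow> z i \<in> lcarrier (free_magma_alg d :: ('k::field, tree \<Rightarrow> 'k) alg)"
  shows "is_hom (free_magma_alg d) (free_magma_alg d) (subst z)"
proof -
  have fin: "finite (supp f)" if "f \<in> lcarrier (free_magma_alg d)" for f :: "tree \<Rightarrow> 'k"
    using that by (simp add: free_magma_alg_carrier)
  show ?thesis
    unfolding is_hom_def is_lin_def
    using subst_closed[OF z] subst_add[OF fin fin] subst_smult[OF fin] subst_br[OF fin fin] by simp
qed

lemma subst_leaf: "subst z (tree_monomial (Leaf i)) = z i"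
proof -
  have "supp (tree_monomial (Leaf i) :: tree \<Rightarrow> 'a) = {Leaf i}" unfolding supp_def tree_monomial_def
    by auto
  then show ?thesis unfolding subst_def by (auto simp: tree_monomial_def)
qed

primrec num_leaves :: "tree \<Rightarrow> nat" where
  "num_leaves (Leaf i) = 1"
| "num_leaves (Node a b) = num_leaves a + num_leaves b"

lemma num_leaves_pos: "num_leaves s \<ge> 1" by (induction s) auto

lemma finite_trees_num_leaves_le: "finite {s. leaves s \<subseteq> {..<d} \<and> num_leaves s \<le> N}"
  (is "finite (?S N)")
proof (induction N)
  case 0
  have "?S 0 = {}"
    using num_leaves_pos by (metis (no_types, lifting) Collect_empty_eq le_zero_eq not_one_le_zero)
  then show ?case by (metis finite.emptyI)
next
  case (Suc m)
  have "?S (Suc m) \<subseteq> Leaf ` {..<d} \<union> (\<lambda>(a, b). Node a b) ` (?S m \<times> ?S m)"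
  proof
    fix s assume s: "s \<in> ?S (Suc m)"
    show "s \<in> Leaf ` {..<d} \<union> (\<lambda>(a, b). Node a b) ` (?S m \<times> ?S m)"
    proof (cases s)
      case (Leaf i) then show ?thesis using s by auto
    next
      case (Node a b)
      have "num_leaves a \<le> m" "num_leaves b \<le> m"
        using s Node num_leaves_pos[of a] num_leaves_pos[of b] by auto
      then show ?thesis using s Node by (auto intro!: image_eqI[of _ _ "(a, b)"])
    qed
  qed
  moreover have "finite (Leaf ` {..<d} \<union> (\<lambda>(a, b). Node a b) ` (?S m \<times> ?S m))"
    using Suc.IH by simp
  ultimately show ?case using finite_subset by blast
qed

section \<open>The free nilpotent Lie algebra\<close>

locale free_nilpotent_lie =
  fixes d t :: nat and M :: "('k::field, tree \<Rightarrow> 'k) alg"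
  assumes M_def: "M = free_magma_alg d"
begin

abbreviation "J \<equiv> gen_two_sided_ideal M (lie_relations M)"
abbreviation "FL \<equiv> lie_quot M J"
abbreviation "K \<equiv> lcs FL (Suc t)"
abbreviation "N \<equiv> lie_quot FL K"

lemma nonassoc_algebra_M: "nonassoc_algebra M"
  unfolding M_def by (rule nonassoc_algebra_free_magma)

end

sublocale free_nilpotent_lie \<subseteq> M: nonassoc_algebra M
  by (rule nonassoc_algebra_M)

context free_nilpotent_lie
begin

lemma two_sided_ideal_J: "two_sided_ideal M J"
  by (rule M.two_sided_ideal_gen[OF M.lie_relations_subset])

lemma lie_relations_subset_J: "lie_relations M \<subseteq> J"
  by (rule M.gen_two_sided_ideal_superset)

lemma J_least: "two_sided_ideal M I \<Longrightarrow> lie_relations M \<subseteq> I \<Longrightarrow> J \<subseteq> I"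
  by (rule M.gen_two_sided_ideal_least)

end

sublocale free_nilpotent_lie \<subseteq> M_quot: quotient_algebra M J
  by unfold_locales (rule two_sided_ideal_J)

context free_nilpotent_lie begin

lemma lie_algebra_FL: "lie_algebra FL"
proof -
  interpret FL_alg: nonassoc_algebra FL by (rule M_quot.nonassoc_algebra_quot)
  show ?thesis
  proof unfold_locales
    fix x assume "x \<in> lcarrier FL"
    then obtain a where a: "a \<in> lcarrier M" "x = lcoset M J a" by auto
    have "lbr M a a \<in> J" using lie_relations_subset_J a unfolding lie_relations_def by blast
    then show "lbr FL x x = lzero FL" using a M_quot.lcoset_eq_zero_iff by simp
  next
    fix x y z assume "x \<in> lcarrier FL" "y \<in> lcarrier FL" "z \<in> lcarrier FL"
    then obtain a b c where a: "a \<in> lcarrier M" "x = lcoset M J a"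
      "b \<in> lcarrier M" "y = lcoset M J b" "c \<in> lcarrier M" "z = lcoset M J c"
      by auto
    have "ladd M (ladd M (lbr M a (lbr M b c)) (lbr M b (lbr M c a))) (lbr M c (lbr M a b)) \<in> J"
      using lie_relations_subset_J a unfolding lie_relations_def by blast
    then show "ladd FL (ladd FL (lbr FL x (lbr FL y z)) (lbr FL y (lbr FL z x)))
        (lbr FL z (lbr FL x y)) = lzero FL"
      using a M_quot.lcoset_eq_zero_iff by simp
  qed
qed

end

sublocale free_nilpotent_lie \<subseteq> FL: lie_algebra FL by (rule lie_algebra_FL)
sublocale free_nilpotent_lie \<subseteq> FL_quot: quotient_algebra FL K
  by unfold_locales (rule FL.two_sided_ideal_lcs)
sublocale free_nilpotent_lie \<subseteq> N: lie_algebra N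
  by (rule FL_quot.lie_algebra_quot[OF FL.lie_algebra_axioms])

context free_nilpotent_lie begin

lemma br_tree_monomial_M: "lbr M (tree_monomial a) (tree_monomial b) = tree_monomial (Node a b)"
  unfolding M_def by (rule br_tree_monomial)

lemma tree_monomial_closed_M: "leaves s \<subseteq> {..<d} \<Longrightarrow> tree_monomial s \<in> lcarrier M"
  unfolding M_def by (rule tree_monomial_closed)

lemma free_nilpotent_eq: "free_nilpotent d t = N"
  unfolding free_nilpotent_def free_lie_def M_def by simp

definition proj :: "(tree \<Rightarrow> 'k) \<Rightarrow> (tree \<Rightarrow> 'k) set set" where
  "proj f = lcoset FL K (lcoset M J f)"

lemma is_hom_proj: "is_hom M N proj"
  unfolding proj_def by (rule is_hom_comp[OF M_quot.is_hom_lcoset FL_quot.is_hom_lcoset])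

lemma proj_surj: "proj ` lcarrier M = lcarrier N"
  unfolding proj_def image_image[symmetric] by simp

lemma N_nilpotent: "lcs N (Suc t) = {lzero N}"
proof
  show "lcs N (Suc t) \<subseteq> {lzero N}"
  proof
    fix x assume "x \<in> lcs N (Suc t)"
    then obtain a where a: "a \<in> K" "x = lcoset FL K a"
      using lcs_subset_image_surj_hom[OF FL.nonassoc_algebra_axioms N.nonassoc_algebra_axioms
          FL_quot.is_hom_lcoset FL_quot.quot_carrier[symmetric]]
      by blast
    have aC: "a \<in> lcarrier FL" using a FL_quot.ideal_subset by blast
    have "lcoset FL K a = lzero N" using FL_quot.lcoset_eq_zero_iff[OF aC] a by blast
    then show "x \<in> {lzero N}" using a by simp
  qed
  show "{lzero N} \<subseteq> lcs N (Suc t)" using N.subspaceD(2)[OF N.subspace_lcs] by simp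
qed

definition gen :: "nat \<Rightarrow> (tree \<Rightarrow> 'k) set set" where
  "gen i = proj (tree_monomial (Leaf i))"

lemma vanishes_on_J:
  assumes h: "is_hom M N h" and x: "x \<in> J"
  shows "h x = lzero N"
proof -
  have "J \<subseteq> {x \<in> lcarrier M. h x = lzero N}"
  proof (rule J_least[OF two_sided_ideal_kernel[OF M.nonassoc_algebra_axioms
          N.nonassoc_algebra_axioms h]])
    show "lie_relations M \<subseteq> {x \<in> lcarrier M. h x = lzero N}"
    proof
      fix r assume "r \<in> lie_relations M"
      then consider (square) a where "a \<in> lcarrier M" "r = lbr M a a"
        | (jacobi) a b c where "a \<in> lcarrier M" "b \<in> lcarrier M" "c \<in> lcarrier M"
            "r = ladd M (ladd M (lbr M a (lbr M b c)) (lbr M b (lbr M c a))) (lbr M c (lbr M a b))"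
        unfolding lie_relations_def by blast
      then show "r \<in> {x \<in> lcarrier M. h x = lzero N}"
      proof cases
        case square then show ?thesis using is_homD[OF h] by simp
      next
        case jacobi then show ?thesis using is_homD[OF h] N.jacobi by simp
      qed
    qed
  qed
  from subsetD[OF this x] show ?thesis by simp
qed

lemma N_extend_subst:
  assumes z: "\<And>i. i < d \<Longrightarrow> z i \<in> lcarrier M"
  obtains \<Phi> where "is_hom N N \<Phi>" "\<And>f. f \<in> lcarrier M \<Longrightarrow> \<Phi> (proj f) = proj (subst z f)"
proof -
  let ?h = "\<lambda>f. proj (subst z f)"
  have "is_hom M M (subst z)"
    using is_hom_subst[of d z] z unfolding M_def by simp
  then have h: "is_hom M N ?h" using is_hom_proj by (rule is_hom_comp)
  let ?h1 = "\<lambda>A. ?h (lrep A)"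
  have h1: "is_hom FL N ?h1"
    using M_quot.is_hom_factor[OF N.nonassoc_algebra_axioms h vanishes_on_J[OF h]] .
  have h1_lcoset: "\<And>f. f \<in> lcarrier M \<Longrightarrow> ?h1 (lcoset M J f) = ?h f"
    using M_quot.factor_lcoset[OF N.nonassoc_algebra_axioms h vanishes_on_J[OF h]] .
  have h1_K: "\<And>x. x \<in> K \<Longrightarrow> ?h1 x = lzero N"
    using is_hom_image_lcs[OF FL.nonassoc_algebra_axioms N.nonassoc_algebra_axioms h1, of "Suc t"]
      N_nilpotent by blast
  let ?h2 = "\<lambda>B. ?h1 (lrep B)"
  have h2: "is_hom N N ?h2"
    using FL_quot.is_hom_factor[OF N.nonassoc_algebra_axioms h1 h1_K] .
  have h2_lcoset: "\<And>A. A \<in> lcarrier FL \<Longrightarrow> ?h2 (lcoset FL K A) = ?h1 A"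
    using FL_quot.factor_lcoset[OF N.nonassoc_algebra_axioms h1 h1_K] .
  show thesis
  proof (rule that[OF h2])
    fix f assume f: "f \<in> lcarrier M"
    have "proj f = lcoset FL K (lcoset M J f)" by (simp only: proj_def)
    then have "?h2 (proj f) = ?h1 (lcoset M J f)" using h2_lcoset[of "lcoset M J f"] f by simp
    also have "\<dots> = proj (subst z f)" using h1_lcoset f by simp
    finally show "?h2 (proj f) = proj (subst z f)" .
  qed
qed

lemma N_hom_eqI:
  assumes L': "nonassoc_algebra L'" and g1: "is_hom N L' g1" and g2: "is_hom N L' g2"
    and eq: "\<And>i. i < d \<Longrightarrow> g1 (gen i) = g2 (gen i)"
    and x: "x \<in> lcarrier N"
  shows "g1 x = g2 x"
proof -
  interpret B: nonassoc_algebra L' by fact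
  have G1: "is_hom M L' (\<lambda>f. g1 (proj f))" by (rule is_hom_comp[OF is_hom_proj g1])
  have G2: "is_hom M L' (\<lambda>f. g2 (proj f))" by (rule is_hom_comp[OF is_hom_proj g2])
  let ?W = "{f \<in> lcarrier M. g1 (proj f) = g2 (proj f)}"
  have z1: "g1 (proj (lzero M)) = lzero L'"
    by (rule is_lin_zero[OF M.nonassoc_algebra_axioms L' is_homD(5)[OF G1]])
  have z2: "g2 (proj (lzero M)) = lzero L'"
    by (rule is_lin_zero[OF M.nonassoc_algebra_axioms L' is_homD(5)[OF G2]])
  have W: "subspace_of (free_magma_alg d) ?W"
    unfolding M_def[symmetric] subspace_of_def using z1 z2 is_homD[OF G1] is_homD[OF G2] by auto
  have "lcarrier (free_magma_alg d) \<subseteq> ?W"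
  proof (rule free_magma_generated_by_leaves[OF W])
    fix a b assume "a \<in> ?W" "b \<in> ?W"
    then show "lbr (free_magma_alg d) a b \<in> ?W"
      unfolding M_def[symmetric] using is_homD[OF G1] is_homD[OF G2] by auto
  next
    fix i assume "i < d"
    then show "tree_monomial (Leaf i) \<in> ?W"
      using eq[of i] tree_monomial_closed_M[of "Leaf i"] unfolding gen_def by auto
  qed
  then have sub: "lcarrier M \<subseteq> ?W" unfolding M_def .
  obtain f where f: "f \<in> lcarrier M" "x = proj f" using x proj_surj by (metis imageE)
  then show ?thesis using sub by blast
qed

lemma proj_tree_monomial_lcs: "leaves s \<subseteq> {..<d} \<Longrightarrow> proj (tree_monomial s) \<in> lcs N (num_leaves s)"
proof (induction s)
  case (Leaf i)
  then show ?case using is_homD(1)[OF is_hom_proj] tree_monomial_closed_M[of "Leaf i"] by simp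
next
  case (Node a b)
  obtain i where i: "num_leaves a = Suc i" using num_leaves_pos[of a] by (cases "num_leaves a") auto
  obtain j where j: "num_leaves b = Suc j" using num_leaves_pos[of b] by (cases "num_leaves b") auto
  note ij = i j
  have ca: "tree_monomial a \<in> lcarrier M" "tree_monomial b \<in> lcarrier M"
    using Node.prems tree_monomial_closed_M by auto
  have "lbr N (proj (tree_monomial a)) (proj (tree_monomial b)) \<in> lcs N (Suc (Suc (i + j)))"
    using N.lcs_br_lcs Node ij by simp
  moreover have
    "proj (tree_monomial (Node a b)) = lbr N (proj (tree_monomial a)) (proj (tree_monomial b))"
    using is_homD(4)[OF is_hom_proj ca] br_tree_monomial_M[of a b] by simp
  ultimately show ?case using ij by simp
qed

definition short_monomials :: "(tree \<Rightarrow> 'k) set set set" where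
  "short_monomials = (\<lambda>s. proj (tree_monomial s)) ` {s. leaves s \<subseteq> {..<d} \<and> num_leaves s \<le> t}"

lemma finite_short_monomials: "finite short_monomials"
  unfolding short_monomials_def using finite_trees_num_leaves_le by simp

lemma short_monomials_subset: "short_monomials \<subseteq> lcarrier N"
  unfolding short_monomials_def using is_homD(1)[OF is_hom_proj] tree_monomial_closed_M by auto

lemma N_spanned_by_short_monomials:
  assumes W: "subspace_of N W" and short: "short_monomials \<subseteq> W"
  shows "lcarrier N \<subseteq> W"
proof -
  let ?W = "{f \<in> lcarrier M. proj f \<in> W}"
  have "subspace_of M ?W"
    by (rule subspace_vimage[OF M.nonassoc_algebra_axioms N.nonassoc_algebra_axioms
          is_homD(5)[OF is_hom_proj] W])
  have "lcarrier (free_magma_alg d) \<subseteq> ?W"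
  proof (rule free_magma_spanned_by_monomials)
    show "subspace_of (free_magma_alg d) ?W" using \<open>subspace_of M ?W\<close> unfolding M_def .
    fix s assume s: "leaves s \<subseteq> {..<d}"
    have sc: "tree_monomial s \<in> lcarrier M" using tree_monomial_closed_M[OF s] .
    show "tree_monomial s \<in> ?W"
    proof (cases "num_leaves s \<le> t")
      case True then show ?thesis using short s sc unfolding short_monomials_def by blast
    next
      case False
      then have "lcs N (num_leaves s) \<subseteq> lcs N (Suc t)" by (intro N.lcs_antimono) simp
      then have "proj (tree_monomial s) = lzero N"
        using proj_tree_monomial_lcs[OF s] N_nilpotent by auto
      then show ?thesis using sc N.subspaceD(2)[OF W] by simp
    qed
  qed
  then have sub: "lcarrier M \<subseteq> ?W" unfolding M_def .
  show ?thesis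
  proof
    fix x assume "x \<in> lcarrier N"
    then obtain f where "f \<in> lcarrier M" "x = proj f" using proj_surj by (metis imageE)
    then show "x \<in> W" using sub by blast
  qed
qed

lemma N_is_lin_surj_imp_inj: "is_lin N N f \<Longrightarrow> f ` lcarrier N = lcarrier N \<Longrightarrow> inj_on f (lcarrier N)"
  by (rule N.is_lin_surj_imp_inj[OF finite_short_monomials short_monomials_subset
        N_spanned_by_short_monomials])

end

section \<open>Automorphisms of the quotient\<close>

locale free_nilpotent_quotient =
  free_nilpotent_lie d t M for d t and M :: "('k::field, tree \<Rightarrow> 'k) alg" +
  fixes T :: "(tree \<Rightarrow> 'k) set set set"
  assumes T_ideal: "lie_ideal N T" and T_derived: "T \<subseteq> lcs N 2"

sublocale free_nilpotent_quotient \<subseteq> T_quot: quotient_algebra N T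
  by unfold_locales (rule N.lie_ideal_imp_two_sided_ideal[OF T_ideal])

sublocale free_nilpotent_quotient \<subseteq> Q: lie_algebra "lie_quot N T"
  by (rule T_quot.lie_algebra_quot[OF N.lie_algebra_axioms])

context free_nilpotent_quotient begin

declare M_quot.quot_carrier[simp del] FL_quot.quot_carrier[simp del] T_quot.quot_carrier[simp del]

abbreviation "Q \<equiv> lie_quot N T"

lemma Q_spanned_by_short_monomials:
  "subspace_of Q W \<Longrightarrow> lcoset N T ` short_monomials \<subseteq> W \<Longrightarrow> lcarrier Q \<subseteq> W"
proof -
  assume W: "subspace_of Q W" and A: "lcoset N T ` short_monomials \<subseteq> W"
  have s: "subspace_of N {x \<in> lcarrier N. lcoset N T x \<in> W}"
    by (rule subspace_vimage[OF N.nonassoc_algebra_axioms Q.nonassoc_algebra_axioms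
          is_homD(5)[OF T_quot.is_hom_lcoset] W])
  have "lcarrier N \<subseteq> {x \<in> lcarrier N. lcoset N T x \<in> W}"
    by (rule N_spanned_by_short_monomials[OF s]) (use A short_monomials_subset in auto)
  then show "lcarrier Q \<subseteq> W" unfolding T_quot.quot_carrier by auto
qed

lemma Q_is_lin_surj_imp_inj: "is_lin Q Q f \<Longrightarrow> f ` lcarrier Q = lcarrier Q \<Longrightarrow> inj_on f (lcarrier Q)"
  by (rule Q.is_lin_surj_imp_inj[OF _ _ Q_spanned_by_short_monomials])
    (use finite_short_monomials short_monomials_subset in auto)

definition induced_aut :: "((tree \<Rightarrow> 'k) set set \<Rightarrow> (tree \<Rightarrow> 'k) set set) \<Rightarrow>
    (tree \<Rightarrow> 'k) set set set \<Rightarrow> (tree \<Rightarrow> 'k) set set set" where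
  "induced_aut \<Phi> = (\<lambda>A\<in>lcarrier Q. lcoset N T (\<Phi> (lrep A)))"

lemma
  assumes h: "is_hom N N \<Phi>" and TT: "\<Phi> ` T \<subseteq> T"
  shows is_hom_induced_aut: "is_hom Q Q (induced_aut \<Phi>)"
    and induced_aut_lcoset: "x \<in> lcarrier N \<Longrightarrow> induced_aut \<Phi> (lcoset N T x) = lcoset N T (\<Phi> x)"
proof -
  have h1: "is_hom N Q (\<lambda>x. lcoset N T (\<Phi> x))" by (rule is_hom_comp[OF h T_quot.is_hom_lcoset])
  have vanish: "\<And>x. x \<in> T \<Longrightarrow> lcoset N T (\<Phi> x) = lzero Q"
    using TT T_quot.lcoset_eq_zero_iff T_quot.ideal_subset by blast
  have "is_hom Q Q (\<lambda>A. lcoset N T (\<Phi> (lrep A)))"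
    by (rule T_quot.is_hom_factor[OF Q.nonassoc_algebra_axioms h1 vanish])
  then show "is_hom Q Q (induced_aut \<Phi>)"
    by (rule is_hom_cong[OF Q.nonassoc_algebra_axioms]) (simp add: induced_aut_def)
  show "x \<in> lcarrier N \<Longrightarrow> induced_aut \<Phi> (lcoset N T x) = lcoset N T (\<Phi> x)"
    using T_quot.factor_lcoset[OF Q.nonassoc_algebra_axioms h1 vanish]
      by (simp add: induced_aut_def)
qed

lemma induced_aut_lie_auts:
  assumes f: "\<Phi> \<in> lie_auts N" and TT: "\<Phi> ` T \<subseteq> T"
  shows "induced_aut \<Phi> \<in> lie_auts Q"
proof -
  have h: "is_hom N N \<Phi>" and b: "bij_betw \<Phi> (lcarrier N) (lcarrier N)"
    using N.lie_autsD[OF f] by auto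
  note ip = is_hom_induced_aut[OF h TT] induced_aut_lcoset[OF h TT]
  have surj: "induced_aut \<Phi> ` lcarrier Q = lcarrier Q"
  proof
    show "induced_aut \<Phi> ` lcarrier Q \<subseteq> lcarrier Q" using is_homD(1)[OF ip(1)] by auto
    show "lcarrier Q \<subseteq> induced_aut \<Phi> ` lcarrier Q"
    proof
      fix A assume "A \<in> lcarrier Q"
      then obtain y where y: "y \<in> lcarrier N" "A = lcoset N T y" unfolding T_quot.quot_carrier
        by auto
      have "y \<in> \<Phi> ` lcarrier N" using b y(1) unfolding bij_betw_def by simp
      then obtain x where x: "x \<in> lcarrier N" "y = \<Phi> x" by (rule imageE) simp
      have "A = induced_aut \<Phi> (lcoset N T x)" using ip(2)[OF x(1)] x y by simp
      then show "A \<in> induced_aut \<Phi> ` lcarrier Q" using x(1) by simp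
    qed
  qed
  show ?thesis
  proof (rule Q.lie_autsI)
    show "induced_aut \<Phi> \<in> extensional (lcarrier Q)" by (simp add: induced_aut_def)
    show "bij_betw (induced_aut \<Phi>) (lcarrier Q) (lcarrier Q)" unfolding bij_betw_def
      using surj Q_is_lin_surj_imp_inj[OF is_homD(5)[OF ip(1)] surj] by simp
    show "is_hom Q Q (induced_aut \<Phi>)" by (rule ip(1))
  qed
qed

lemma inv_T_stable:
  assumes f: "\<Phi> \<in> lie_auts N" and TT: "\<Phi> ` T \<subseteq> T"
  shows "(\<lambda>x\<in>lcarrier N. inv_into (lcarrier N) \<Phi> x) ` T \<subseteq> T"
proof
  fix y assume "y \<in> (\<lambda>x\<in>lcarrier N. inv_into (lcarrier N) \<Phi> x) ` T"
  then obtain u where u: "u \<in> T" "y = (\<lambda>x\<in>lcarrier N. inv_into (lcarrier N) \<Phi> x) u" by auto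
  have h: "is_hom N N \<Phi>" and b: "bij_betw \<Phi> (lcarrier N) (lcarrier N)"
    using N.lie_autsD[OF f] by auto
  have uC: "u \<in> lcarrier N" using u T_quot.ideal_subset by auto
  have yC: "y \<in> lcarrier N" and Py: "\<Phi> y = u" using u uC b
    by (auto simp: bij_betw_def inv_into_into f_inv_into_f)
  note ip = is_hom_induced_aut[OF h TT] induced_aut_lcoset[OF h TT]
  have ia: "induced_aut \<Phi> \<in> lie_auts Q" by (rule induced_aut_lie_auts[OF f TT])
  have inj: "inj_on (induced_aut \<Phi>) (lcarrier Q)"
    using Q.lie_autsD(2)[OF ia] unfolding bij_betw_def by simp
  have "induced_aut \<Phi> (lcoset N T y) = lcoset N T u" using ip(2)[OF yC] Py by simp
  also have "\<dots> = lzero Q" using T_quot.lcoset_eq_zero_iff uC u by simp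
  also have "\<dots> = induced_aut \<Phi> (lzero Q)"
    using is_lin_zero[OF Q.nonassoc_algebra_axioms Q.nonassoc_algebra_axioms is_homD(5)[OF ip(1)]]
      by simp
  finally have "lcoset N T y = lzero Q"
    using inj_onD[OF inj _ T_quot.lcoset_closed[OF yC] Q.zero_closed] by simp
  then show "y \<in> T" using T_quot.lcoset_eq_zero_iff yC by simp
qed

definition T_stable_auts :: "((tree \<Rightarrow> 'k) set set \<Rightarrow> (tree \<Rightarrow> 'k) set set) set" where
  "T_stable_auts = {\<Phi> \<in> lie_auts N. \<Phi> ` T \<subseteq> T}"

lemma Aut_t_eq: "Aut_t N T = (BijGroup (lcarrier N))\<lparr>carrier := T_stable_auts\<rparr>"
  unfolding Aut_t_def Aut_def T_stable_auts_def by simp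

lemma subgroup_T_stable_auts: "subgroup T_stable_auts (BijGroup (lcarrier N))"
proof (rule N.subgroup_BijGroup_lie_auts)
  show "T_stable_auts \<subseteq> lie_auts N" unfolding T_stable_auts_def by auto
  show "(\<lambda>x\<in>lcarrier N. x) \<in> T_stable_auts" unfolding T_stable_auts_def
    using N.id_lie_auts T_quot.ideal_subset by auto
  fix f g assume f: "f \<in> T_stable_auts" and g: "g \<in> T_stable_auts"
  have "compose (lcarrier N) f g ` T \<subseteq> T"
  proof
    fix y assume "y \<in> compose (lcarrier N) f g ` T"
    then obtain u where u: "u \<in> T" "y = compose (lcarrier N) f g u" by auto
    have "u \<in> lcarrier N" using u T_quot.ideal_subset by auto
    then have "y = f (g u)" using u by (simp add: compose_def)
    moreover have "g u \<in> T" using g u unfolding T_stable_auts_def by auto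
    ultimately show "y \<in> T" using f unfolding T_stable_auts_def by auto
  qed
  then show "compose (lcarrier N) f g \<in> T_stable_auts"
    using N.compose_lie_auts f g unfolding T_stable_auts_def by auto
next
  fix f assume f: "f \<in> T_stable_auts"
  have f1: "f \<in> lie_auts N" "f ` T \<subseteq> T" using f unfolding T_stable_auts_def by auto
  have "(\<lambda>x\<in>lcarrier N. inv_into (lcarrier N) f x) \<in> lie_auts N" using N.inv_lie_auts[OF f1(1)] .
  moreover have "(\<lambda>x\<in>lcarrier N. inv_into (lcarrier N) f x) ` T \<subseteq> T" using inv_T_stable[OF f1] .
  ultimately show "(\<lambda>x\<in>lcarrier N. inv_into (lcarrier N) f x) \<in> T_stable_auts"
    unfolding T_stable_auts_def by blast
qed

lemma group_Aut_t: "group (Aut_t N T)"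
  unfolding Aut_t_eq by (rule subgroup.subgroup_is_group[OF subgroup_T_stable_auts group_BijGroup])

lemma induced_aut_compose:
  assumes f: "f \<in> T_stable_auts" and g: "g \<in> T_stable_auts"
  shows "induced_aut (compose (lcarrier N) f g) =
    compose (lcarrier Q) (induced_aut f) (induced_aut g)"
proof
  fix A
  have hf: "is_hom N N f" "f ` T \<subseteq> T" using f N.lie_autsD unfolding T_stable_auts_def by auto
  have hg: "is_hom N N g" "g ` T \<subseteq> T" using g N.lie_autsD unfolding T_stable_auts_def by auto
  show "induced_aut (compose (lcarrier N) f g) A =
    compose (lcarrier Q) (induced_aut f) (induced_aut g) A"
  proof (cases "A \<in> lcarrier Q")
    case True
    have r: "lrep A \<in> lcarrier N" using T_quot.lrep_closed True by simp
    have gr: "g (lrep A) \<in> lcarrier N" using is_homD(1)[OF hg(1) r] .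
    have igA: "induced_aut g A = lcoset N T (g (lrep A))"
      using True unfolding induced_aut_def by simp
    have "induced_aut f (induced_aut g A) = lcoset N T (f (g (lrep A)))"
      by (simp only: igA induced_aut_lcoset[OF hf gr])
    moreover have "compose (lcarrier Q) (induced_aut f) (induced_aut g) A =
        induced_aut f (induced_aut g A)"
      using True by (simp add: compose_def)
    moreover have "induced_aut (compose (lcarrier N) f g) A = lcoset N T (f (g (lrep A)))"
      using True r unfolding induced_aut_def by (simp add: compose_def)
    ultimately show ?thesis by simp
  next
    case False
    then show ?thesis by (simp add: induced_aut_def compose_def)
  qed
qed

lemma induced_aut_hom: "induced_aut \<in> hom (Aut_t N T) (Aut Q)"
  unfolding hom_def
proof (intro CollectI conjI)
  show "induced_aut \<in> carrier (Aut_t N T) \<rightarrow> carrier (Aut Q)"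
    using induced_aut_lie_auts unfolding Aut_t_eq T_stable_auts_def by (auto simp: Aut_def)
  show "\<forall>x\<in>carrier (Aut_t N T). \<forall>y\<in>carrier (Aut_t N T).
      induced_aut (x \<otimes>\<^bsub>Aut_t N T\<^esub> y) = induced_aut x \<otimes>\<^bsub>Aut Q\<^esub> induced_aut y"
  proof (intro ballI)
    fix x y assume x: "x \<in> carrier (Aut_t N T)" and y: "y \<in> carrier (Aut_t N T)"
    have xH: "x \<in> T_stable_auts" and yH: "y \<in> T_stable_auts" using x y unfolding Aut_t_eq by auto
    have xB: "x \<in> Bij (lcarrier N)" and yB: "y \<in> Bij (lcarrier N)"
      using xH yH N.lie_autsD(1) unfolding T_stable_auts_def by auto
    have ix: "induced_aut x \<in> Bij (lcarrier Q)" and iy: "induced_aut y \<in> Bij (lcarrier Q)"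
      using induced_aut_lie_auts xH yH Q.lie_autsD(1) unfolding T_stable_auts_def by auto
    have "induced_aut (x \<otimes>\<^bsub>Aut_t N T\<^esub> y) = induced_aut (compose (lcarrier N) x y)"
      unfolding Aut_t_eq using xB yB by (simp add: BijGroup_simps)
    also have "\<dots> = compose (lcarrier Q) (induced_aut x) (induced_aut y)"
      by (rule induced_aut_compose[OF xH yH])
    also have "\<dots> = induced_aut x \<otimes>\<^bsub>Aut Q\<^esub> induced_aut y"
      unfolding Aut_def using ix iy by (simp add: BijGroup_simps)
    finally show "induced_aut (x \<otimes>\<^bsub>Aut_t N T\<^esub> y) = induced_aut x \<otimes>\<^bsub>Aut Q\<^esub> induced_aut y" .
  qed
qed

lemma group_hom_induced_aut: "group_hom (Aut_t N T) (Aut Q) induced_aut"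
  by (intro group_hom.intro group_hom_axioms.intro group_Aut_t Q.group_Aut induced_aut_hom)

lemma induced_aut_eq_id_iff:
  assumes f: "f \<in> T_stable_auts"
  shows "induced_aut f = (\<lambda>x\<in>lcarrier Q. x) \<longleftrightarrow> (\<forall>x\<in>lcarrier N. lsub N (f x) x \<in> T)"
proof -
  have hf: "is_hom N N f" "f ` T \<subseteq> T" using f N.lie_autsD unfolding T_stable_auts_def by auto
  note ip = is_hom_induced_aut[OF hf] induced_aut_lcoset[OF hf]
  have "lcoset N T (f x) = lcoset N T x \<longleftrightarrow> lsub N (f x) x \<in> T" if "x \<in> lcarrier N" for x
    using T_quot.lcoset_eq_iff[OF is_homD(1)[OF hf(1) that] that] .
  moreover have "induced_aut f = (\<lambda>x\<in>lcarrier Q. x) \<longleftrightarrow>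
      (\<forall>x\<in>lcarrier N. induced_aut f (lcoset N T x) = lcoset N T x)"
  proof
    assume eq: "\<forall>x\<in>lcarrier N. induced_aut f (lcoset N T x) = lcoset N T x"
    show "induced_aut f = (\<lambda>x\<in>lcarrier Q. x)"
    proof
      fix A show "induced_aut f A = (\<lambda>x\<in>lcarrier Q. x) A"
      proof (cases "A \<in> lcarrier Q")
        case True
        then obtain x where "x \<in> lcarrier N" "A = lcoset N T x" unfolding T_quot.quot_carrier
          by auto
        then show ?thesis using eq True by simp
      qed (simp add: induced_aut_def)
    qed
  qed (simp add: T_quot.lcoset_closed)
  ultimately show ?thesis using ip(2) by simp
qed

lemma T_stable_if_sub_mem_T:
  assumes hf: "is_hom N N f" and sub: "\<forall>x\<in>lcarrier N. lsub N (f x) x \<in> T"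
  shows "f ` T \<subseteq> T"
proof
  fix y assume "y \<in> f ` T"
  then obtain u where u: "u \<in> T" "y = f u" by auto
  have uC: "u \<in> lcarrier N" using u T_quot.ideal_subset by auto
  have "ladd N u (lsub N (f u) u) \<in> T" using T_quot.ideal_add[OF u(1)] sub uC by simp
  then show "y \<in> T" using N.add_sub_cancel[OF is_homD(1)[OF hf uC] uC] u(2) by simp
qed

lemma kernel_induced_aut: "kernel (Aut_t N T) (Aut Q) induced_aut = Aut0_t N T"
proof -
  have "\<one>\<^bsub>Aut Q\<^esub> = (\<lambda>x\<in>lcarrier Q. x)" unfolding Aut_def by (simp add: BijGroup_simps)
  moreover have "f \<in> T_stable_auts \<and> induced_aut f = (\<lambda>x\<in>lcarrier Q. x) \<longleftrightarrow>
      f \<in> lie_auts N \<and> (\<forall>x\<in>lcarrier N. lsub N (f x) x \<in> T)" for f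
    using induced_aut_eq_id_iff T_stable_if_sub_mem_T N.lie_autsD(4) unfolding T_stable_auts_def
      by blast
  ultimately show ?thesis
    unfolding kernel_def Aut0_t_def Aut_t_eq by (auto simp: Aut_def)
qed

text \<open>Lifting an automorphism \<open>\<phi>\<close> of \<open>Q\<close>: send each generator to a preimage of its image under
  \<open>\<phi>\<close> and extend by the universal property of \<open>N\<close>.\<close>

lemma lift_hom:
  assumes h\<phi>: "is_hom Q Q \<phi>"
  obtains \<Phi> where "is_hom N N \<Phi>" "\<And>x. x \<in> lcarrier N \<Longrightarrow> lcoset N T (\<Phi> x) = \<phi> (lcoset N T x)"
proof -
  have gen_closed: "\<And>i. i < d \<Longrightarrow> gen i \<in> lcarrier N"
    unfolding gen_def using is_homD(1)[OF is_hom_proj] tree_monomial_closed_M by simp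
  have "\<exists>f. f \<in> lcarrier M \<and> lcoset N T (proj f) = \<phi> (lcoset N T (gen i))" if i: "i < d" for i
  proof -
    have "\<phi> (lcoset N T (gen i)) \<in> lcoset N T ` proj ` lcarrier M"
      using is_homD(1)[OF h\<phi> T_quot.lcoset_closed[OF gen_closed[OF i]]]
      unfolding proj_surj T_quot.quot_carrier .
    then show ?thesis by blast
  qed
  then obtain z where
    z: "\<And>i. i < d \<Longrightarrow> z i \<in> lcarrier M \<and> lcoset N T (proj (z i)) = \<phi> (lcoset N T (gen i))"
    by metis
  obtain \<Phi> where h0: "is_hom N N \<Phi>" and e0: "\<And>f. f \<in> lcarrier M \<Longrightarrow> \<Phi> (proj f) = proj (subst z f)"
    using N_extend_subst[of z] z by blast
  have "lcoset N T (\<Phi> x) = \<phi> (lcoset N T x)" if "x \<in> lcarrier N" for x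
  proof (rule N_hom_eqI[OF Q.nonassoc_algebra_axioms _ _ _ that])
    show "is_hom N Q (\<lambda>x. lcoset N T (\<Phi> x))" by (rule is_hom_comp[OF h0 T_quot.is_hom_lcoset])
    show "is_hom N Q (\<lambda>x. \<phi> (lcoset N T x))" by (rule is_hom_comp[OF T_quot.is_hom_lcoset h\<phi>])
    fix i assume i: "i < d"
    have "\<Phi> (gen i) = proj (z i)"
      unfolding gen_def using e0 tree_monomial_closed_M[of "Leaf i"] i by (simp add: subst_leaf)
    then show "lcoset N T (\<Phi> (gen i)) = \<phi> (lcoset N T (gen i))" using z[OF i] by simp
  qed
  with h0 show thesis by (rule that)
qed

text \<open>A lift of an automorphism of \<open>Q\<close> is surjective modulo \<open>T \<subseteq> lcs N 2\<close>, hence surjective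
  because \<open>N\<close> is nilpotent, hence bijective because \<open>N\<close> is finite-dimensional.\<close>

lemma lift_bij:
  assumes h0: "is_hom N N \<Phi>" and b\<phi>: "bij_betw \<phi> (lcarrier Q) (lcarrier Q)"
    and comm: "\<And>x. x \<in> lcarrier N \<Longrightarrow> lcoset N T (\<Phi> x) = \<phi> (lcoset N T x)"
  shows "bij_betw \<Phi> (lcarrier N) (lcarrier N)"
proof -
  have base: "\<exists>y\<in>lcarrier N. \<exists>u\<in>lcs N 2. x = ladd N (\<Phi> y) u" if x: "x \<in> lcarrier N" for x
  proof -
    have "lcoset N T x \<in> \<phi> ` lcarrier Q"
      using b\<phi> T_quot.lcoset_closed[OF x] unfolding bij_betw_def by simp
    then obtain y where y: "y \<in> lcarrier N" "lcoset N T x = \<phi> (lcoset N T y)"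
      unfolding T_quot.quot_carrier by auto
    have \<Phi>y: "\<Phi> y \<in> lcarrier N" using is_homD(1)[OF h0 y(1)] .
    have "lcoset N T x = lcoset N T (\<Phi> y)" using y comm by simp
    then have "lsub N x (\<Phi> y) \<in> T" using T_quot.lcoset_eq_iff[OF x \<Phi>y] by simp
    then show ?thesis using y(1) T_derived N.add_sub_cancel[OF x \<Phi>y] by blast
  qed
  have surj: "\<Phi> ` lcarrier N = lcarrier N" by (rule N.nilpotent_hom_surj[OF N_nilpotent h0 base])
  show ?thesis
    unfolding bij_betw_def using surj N_is_lin_surj_imp_inj[OF is_homD(5)[OF h0] surj] by simp
qed

lemma lift_T_stable:
  assumes h0: "is_hom N N \<Phi>" and h\<phi>: "is_hom Q Q \<phi>"
    and comm: "\<And>x. x \<in> lcarrier N \<Longrightarrow> lcoset N T (\<Phi> x) = \<phi> (lcoset N T x)"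
  shows "\<Phi> ` T \<subseteq> T"
proof
  fix y assume "y \<in> \<Phi> ` T"
  then obtain u where u: "u \<in> T" "y = \<Phi> u" by auto
  have uC: "u \<in> lcarrier N" using u T_quot.ideal_subset by auto
  have "lcoset N T (\<Phi> u) = \<phi> (lzero Q)"
    using comm[OF uC] T_quot.lcoset_eq_zero_iff[OF uC] u by simp
  also have "\<dots> = lzero Q"
    by (rule is_lin_zero[OF Q.nonassoc_algebra_axioms Q.nonassoc_algebra_axioms is_homD(5)[OF h\<phi>]])
  finally show "y \<in> T" using T_quot.lcoset_eq_zero_iff[OF is_homD(1)[OF h0 uC]] u by simp
qed

lemma induced_aut_surj: "induced_aut ` carrier (Aut_t N T) = carrier (Aut Q)"
proof
  show "induced_aut ` carrier (Aut_t N T) \<subseteq> carrier (Aut Q)"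
    using induced_aut_hom unfolding hom_def by auto
  show "carrier (Aut Q) \<subseteq> induced_aut ` carrier (Aut_t N T)"
  proof
    fix \<phi> assume "\<phi> \<in> carrier (Aut Q)"
    then have h\<phi>: "is_hom Q Q \<phi>" and b\<phi>: "bij_betw \<phi> (lcarrier Q) (lcarrier Q)"
      and e\<phi>: "\<phi> \<in> extensional (lcarrier Q)"
      using Q.lie_autsD unfolding Aut_def by auto
    obtain \<Phi>0 where h0: "is_hom N N \<Phi>0"
      and comm: "\<And>x. x \<in> lcarrier N \<Longrightarrow> lcoset N T (\<Phi>0 x) = \<phi> (lcoset N T x)"
      using lift_hom[OF h\<phi>] by blast
    let ?\<Phi> = "\<lambda>x\<in>lcarrier N. \<Phi>0 x"
    have "?\<Phi> \<in> lie_auts N"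
    proof (rule N.lie_autsI)
      have "bij_betw ?\<Phi> (lcarrier N) (lcarrier N) = bij_betw \<Phi>0 (lcarrier N) (lcarrier N)"
        by (rule bij_betw_cong) simp
      then show "bij_betw ?\<Phi> (lcarrier N) (lcarrier N)" using lift_bij[OF h0 b\<phi> comm] by simp
      show "is_hom N N ?\<Phi>" by (rule is_hom_cong[OF N.nonassoc_algebra_axioms h0]) simp
    qed simp
    moreover have "?\<Phi> ` T \<subseteq> T"
      using lift_T_stable[OF h0 h\<phi> comm] T_quot.ideal_subset by auto
    moreover have "induced_aut ?\<Phi> = \<phi>"
    proof
      fix A show "induced_aut ?\<Phi> A = \<phi> A"
      proof (cases "A \<in> lcarrier Q")
        case True
        then have "lrep A \<in> lcarrier N" by (rule T_quot.lrep_closed)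
        then show ?thesis
          using True comm T_quot.lcoset_lrep_quot[OF True] unfolding induced_aut_def by simp
      qed (use e\<phi> in \<open>simp add: induced_aut_def extensional_def\<close>)
    qed
    ultimately show "\<phi> \<in> induced_aut ` carrier (Aut_t N T)"
      unfolding Aut_t_eq T_stable_auts_def by force
  qed
qed

lemma normal_Aut0_t_and_iso:
  "Aut0_t N T \<lhd> Aut_t N T \<and> Aut Q \<cong> (Aut_t N T Mod Aut0_t N T)"
proof
  interpret group_hom "Aut_t N T" "Aut Q" induced_aut by (rule group_hom_induced_aut)
  show normal: "Aut0_t N T \<lhd> Aut_t N T" using normal_kernel kernel_induced_aut by simp
  have "(Aut_t N T Mod Aut0_t N T) \<cong> Aut Q"
    using FactGroup_iso[OF induced_aut_surj] kernel_induced_aut by simp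
  then show "Aut Q \<cong> (Aut_t N T Mod Aut0_t N T)"
    using group.iso_sym normal.factorgroup_is_group[OF normal] by blast
qed

end

theorem theorem2:
  fixes d t :: nat and T :: "(tree \<Rightarrow> 'k::field_char_0) set set set"
  defines "n \<equiv> (free_nilpotent d t :: ('k, (tree \<Rightarrow> 'k) set set) alg)"
  assumes "d \<ge> 2" and "t \<ge> 1"
    and "lie_ideal n T"
    and "T \<subseteq> lcs n 2"
    and "\<not> lcs n t \<subseteq> T"
  shows "Aut0_t n T \<lhd> Aut_t n T \<and> Aut (lie_quot n T) \<cong> (Aut_t n T Mod Aut0_t n T)"
proof -
  interpret F: free_nilpotent_lie d t "free_magma_alg d :: ('k, tree \<Rightarrow> 'k) alg"
    by unfold_locales simp
  have n_eq: "n = F.N" unfolding n_def by (rule F.free_nilpotent_eq)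
  interpret free_nilpotent_quotient d t "free_magma_alg d :: ('k, tree \<Rightarrow> 'k) alg" T
    by unfold_locales (use assms(4,5) n_eq in simp_all)
  show ?thesis using normal_Aut0_t_and_iso n_eq by simp
qed

end
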